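(* Let $U$, $x_i$, $x_{i+1/2}$, $h$, $\tilde h_R$, $\tilde h_L$ be as in the context, let $W_i:=\min_{j=1,\dots,k}(\tilde h_R(x_i;x_{j+1})+\tilde h_L(x_i;x_j))$ for $i=1,\dots,k$, and $W(x)=\min_{j=1,\dots,k}\{W_j+h(x;x_j)\}$, $x\in\mathbb{S}^1$. Then: (i) $W$ is Lipschitz continuous and periodic. (ii) In each interval on which $U$ is increasing (resp. decreasing) there is at most one point of non-differentiability of $W$, at which $W$ is an increasing function connected to a constant (resp. a constant connected to a decreasing function). In particular $W$ is differentiable at all critical points $x_i,x_{i+1/2}$, $i=1,\dots,k$. (iii) $W$ is a viscosity solution of $H(W'(x),x)=W'(x)(W'(x)-U'(x))=0$, $x\in\mathbb{S}^1$, and satisfies $W(x_j)=W_j$ for $j=1,\dots,k$.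
   Context: $\mathbb{S}^1=\mathbb{R}/\mathbb{Z}$; $U:\mathbb{R}\to\mathbb{R}$ smooth, skew periodic ($U(x)=\tilde U(x)-\bar bx$, $\tilde U$ smooth 1-periodic), whose critical points in one period are exactly $k\ge1$ local minima $x_1,\dots,x_k$ interleaved with $k$ local maxima, $0=x_{1/2}<x_1<x_{3/2}<\dots<x_k<x_{k+1/2}=1$, $x_{i+\ell k}=x_i+\ell$. $L(s,x)=\frac14(s+U'(x))^2$. Peierls barrier: $h(y;x)=\liminf_{T\to\infty}\inf\{\int_0^TL(\dot\gamma,\gamma)dt:\gamma:[0,T]\to\mathbb{S}^1$ absolutely continuous, $\gamma(0)=x,\gamma(T)=y\}$. Right barrier: for $y\in[x_i,x_{i+k}]$, $h_R(y;x_i)=\inf\{\int_0^TL(\dot\gamma,\gamma)dt:T\ge0,\gamma:[0,T]\to\mathbb{R}$ absolutely continuous, $\gamma(0)=x_i,\gamma(T)=y\}$; left barrier $h_L(y;x_i)$, $y\in[x_{i-k},x_i]$, same formula. For $i,j\in\{1,\dots,k\}$ ($x_{k+1}=x_1+1$): $\tilde h_R(x_i;x_{j+1})=h_R(x_i;x_{j+1})$ if $j<i$, $=h_R(x_{i+k};x_{j+1})$ if $j\ge i$; $\tilde h_L(x_i;x_j)=h_L(x_i;x_j)$ if $j\ge i$, $=h_L(x_{i-k};x_j)$ if $j<i$. *)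

theory Defs
  imports "HOL-Analysis.Analysis"
begin

definition smooth_fun :: "(real \<Rightarrow> real) \<Rightarrow> bool" where
  "smooth_fun f \<longleftrightarrow> (\<forall>n x. ((deriv ^^ n) f) differentiable (at x))"

definition loc_min :: "(real \<Rightarrow> real) \<Rightarrow> real \<Rightarrow> bool" where
  "loc_min f x \<longleftrightarrow> (\<exists>e>0. \<forall>y. \<bar>y - x\<bar> < e \<longrightarrow> f x \<le> f y)"

definition loc_max :: "(real \<Rightarrow> real) \<Rightarrow> real \<Rightarrow> bool" where
  "loc_max f x \<longleftrightarrow> (\<exists>e>0. \<forall>y. \<bar>y - x\<bar> < e \<longrightarrow> f y \<le> f x)"

definition Lag :: "(real \<Rightarrow> real) \<Rightarrow> real \<Rightarrow> real \<Rightarrow> real" where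
  "Lag U s x = (s + deriv U x)^2 / 4"

definition ac_path :: "real \<Rightarrow> (real \<Rightarrow> real) \<Rightarrow> (real \<Rightarrow> real) \<Rightarrow> bool" where
  "ac_path T \<gamma> g \<longleftrightarrow> set_integrable lborel {0..T} g \<and>
     (\<forall>t\<in>{0..T}. \<gamma> t = \<gamma> 0 + (LINT s:{0..t}|lborel. g s))"

text \<open>Action of a path (possibly infinite, hence ennreal).\<close>
definition action :: "(real \<Rightarrow> real) \<Rightarrow> real \<Rightarrow> (real \<Rightarrow> real) \<Rightarrow> (real \<Rightarrow> real) \<Rightarrow> ennreal" where
  "action U T \<gamma> g = set_nn_integral lborel {0..T} (\<lambda>t. ennreal (Lag U (g t) (\<gamma> t)))"

text \<open>Peierls barrier h(y;x) on the circle R/Z (paths lifted to R, endpoint y modulo Z).\<close>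
definition peierls :: "(real \<Rightarrow> real) \<Rightarrow> real \<Rightarrow> real \<Rightarrow> real" where
  "peierls U y x = enn2real (Liminf at_top (\<lambda>T::real.
      INF p \<in> {(\<gamma>, g). ac_path T \<gamma> g \<and> \<gamma> 0 = x \<and> (\<exists>m::int. \<gamma> T = y + of_int m)}.
        action U T (fst p) (snd p)))"

text \<open>Barrier on R (the common formula of h_R and h_L): infimum of the action over all
  T \<ge> 0 and absolutely continuous paths in R from x to y.\<close>
definition barrier :: "(real \<Rightarrow> real) \<Rightarrow> real \<Rightarrow> real \<Rightarrow> real" where
  "barrier U y x = enn2real (INF p \<in> {(T, \<gamma>, g). T \<ge> 0 \<and> ac_path T \<gamma> g \<and> \<gamma> 0 = x \<and> \<gamma> T = y}.
        action U (fst p) (fst (snd p)) (snd (snd p)))"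

definition hR_tilde :: "(real \<Rightarrow> real) \<Rightarrow> (int \<Rightarrow> real) \<Rightarrow> int \<Rightarrow> int \<Rightarrow> int \<Rightarrow> real" where
  "hR_tilde U xm k i j = (if j < i then barrier U (xm i) (xm (j+1)) else barrier U (xm (i+k)) (xm (j+1)))"

definition hL_tilde :: "(real \<Rightarrow> real) \<Rightarrow> (int \<Rightarrow> real) \<Rightarrow> int \<Rightarrow> int \<Rightarrow> int \<Rightarrow> real" where
  "hL_tilde U xm k i j = (if j \<ge> i then barrier U (xm i) (xm j) else barrier U (xm (i-k)) (xm j))"

definition Wcoef :: "(real \<Rightarrow> real) \<Rightarrow> (int \<Rightarrow> real) \<Rightarrow> int \<Rightarrow> int \<Rightarrow> real" where
  "Wcoef U xm k i = Min ((\<lambda>j. hR_tilde U xm k i j + hL_tilde U xm k i j) ` {1..k})"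

definition Wfun :: "(real \<Rightarrow> real) \<Rightarrow> (int \<Rightarrow> real) \<Rightarrow> int \<Rightarrow> real \<Rightarrow> real" where
  "Wfun U xm k x = Min ((\<lambda>j. Wcoef U xm k j + peierls U x (xm j)) ` {1..k})"

definition C1_fun :: "(real \<Rightarrow> real) \<Rightarrow> bool" where
  "C1_fun \<phi> \<longleftrightarrow> (\<forall>x. \<phi> differentiable (at x)) \<and> continuous_on UNIV (deriv \<phi>)"

definition viscosity_solution :: "(real \<Rightarrow> real \<Rightarrow> real) \<Rightarrow> (real \<Rightarrow> real) \<Rightarrow> bool" where
  "viscosity_solution H u \<longleftrightarrow> continuous_on UNIV u \<and>
     (\<forall>\<phi> x. C1_fun \<phi> \<and> loc_max (\<lambda>y. u y - \<phi> y) x \<longrightarrow> H (deriv \<phi> x) x \<le> 0) \<and>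
     (\<forall>\<phi> x. C1_fun \<phi> \<and> loc_min (\<lambda>y. u y - \<phi> y) x \<longrightarrow> H (deriv \<phi> x) x \<ge> 0)"

end

theory Submission
  imports Defs
begin

(* Let P and Q be antiderivatives of max 0 U' and max 0 (- U'). Starting from a critical point x,
   reaching y costs exactly the total rise of U met on the way, climb x y = P y - P x for x <= y and
   Q x - Q y for y <= x: every absolutely continuous path pays at least this, since
   s * max 0 U' <= (s + U')^2 / 4 pointwise, while resting at x (free, as U' x = 0) and then moving
   with speed |U'| + delta pays at most this plus O(delta). So all barriers from the wells are
   explicit and W x is the infimum, over all lifts x_n of the wells, of W_n + climb x_n x. On an
   interval where U increases (decreases) the wells to the left and to the right of it contribute
   separately, which gives W = min (U + alpha) beta (resp. min beta (U + alpha)) there; the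
   Lipschitz bound, the shape of the kinks, differentiability at critical points and the viscosity
   inequalities are read off from this form. *)

section \<open>Calculus on the real line\<close>

lemma continuous_has_real_antiderivative:
  fixes h :: "real \<Rightarrow> real"
  assumes "continuous_on UNIV h"
  obtains H where "\<And>z. (H has_real_derivative h z) (at z)"
proof -
  obtain H where "\<forall>z::real. - \<infinity> < z \<longrightarrow> z < \<infinity> \<longrightarrow> (H has_vector_derivative h z) (at z)"
    using einterval_antiderivative[of "- \<infinity>" \<infinity> h] assms
    by (auto simp: continuous_on_eq_continuous_at)
  then have "(H has_real_derivative h z) (at z)" for z
    by (simp add: has_real_derivative_iff_has_vector_derivative)
  with that show thesis by blast
qed

lemma MVT_unordered:
  fixes F F' :: "real \<Rightarrow> real"
  assumes F: "\<And>z. (F has_real_derivative F' z) (at z)"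
  obtains \<xi> where "min a b \<le> \<xi>" "\<xi> \<le> max a b" "F b - F a = (b - a) * F' \<xi>"
proof (cases a b rule: linorder_cases)
  case less
  then obtain \<xi> where "a < \<xi>" "\<xi> < b" "F b - F a = (b - a) * F' \<xi>"
    using MVT2[of a b F F'] F by blast
  then show thesis
    using that[of \<xi>] less by auto
next
  case equal
  then show thesis
    using that by auto
next
  case greater
  then obtain \<xi> where "b < \<xi>" "\<xi> < a" "F a - F b = (a - b) * F' \<xi>"
    using MVT2[of b a F F'] F by blast
  then show thesis
    using that[of \<xi>] by (auto simp: algebra_simps)
qed

lemma DERIV_zero_Icc_eq:
  fixes f :: "real \<Rightarrow> real"
  assumes "\<And>z. z \<in> {a..b} \<Longrightarrow> (f has_real_derivative 0) (at z)" "x \<in> {a..b}" "y \<in> {a..b}"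
  shows "f x = f y"
proof -
  have "\<exists>c. \<forall>z\<in>{a..b}. f z = c"
    by (rule has_field_derivative_zero_constant) (auto intro!: has_field_derivative_at_within assms(1))
  then show ?thesis
    using assms(2,3) by auto
qed

lemma DERIV_zero_if_dominated:
  fixes u v :: "real \<Rightarrow> real"
  assumes v: "(v has_real_derivative 0) (at c)"
    and dominated: "\<And>y. \<bar>u y - u c\<bar> \<le> \<bar>v y - v c\<bar>"
  shows "(u has_real_derivative 0) (at c)"
proof -
  have "((\<lambda>y. \<bar>(v y - v c) / (y - c)\<bar>) \<longlongrightarrow> 0) (at c)"
    using v by (intro tendsto_rabs_zero) (simp add: has_field_derivative_iff)
  moreover have "\<forall>\<^sub>F y in at c. norm ((u y - u c) / (y - c)) \<le> \<bar>(v y - v c) / (y - c)\<bar>"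
    by (intro always_eventually allI) (simp add: abs_divide divide_right_mono dominated)
  ultimately have "((\<lambda>y. (u y - u c) / (y - c)) \<longlongrightarrow> 0) (at c)"
    by (rule Lim_null_comparison[rotated])
  then show ?thesis
    by (simp add: has_field_derivative_iff)
qed

lemma continuous_nonzero_sign_constant:
  fixes f :: "real \<Rightarrow> real"
  assumes f: "continuous_on {a..b} f" and nonzero: "\<And>x. x \<in> {a<..<b} \<Longrightarrow> f x \<noteq> 0"
    and w: "w \<in> {a<..<b}" and z: "z \<in> {a<..<b}" and "f w > 0"
  shows "f z > 0"
proof (rule ccontr)
  assume "\<not> f z > 0"
  then have "f z \<le> 0" by simp
  obtain c where c: "min w z \<le> c" "c \<le> max w z" "f c = 0"
  proof (cases "w \<le> z")
    case True
    have "continuous_on {w..z} f"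
      using w z by (intro continuous_on_subset[OF f]) auto
    then obtain c where "w \<le> c" "c \<le> z" "f c = 0"
      using IVT2'[of f z 0 w] \<open>f z \<le> 0\<close> \<open>f w > 0\<close> True by auto
    then show thesis
      using that True by auto
  next
    case False
    have "continuous_on {z..w} f"
      using w z by (intro continuous_on_subset[OF f]) auto
    then obtain c where "z \<le> c" "c \<le> w" "f c = 0"
      using IVT'[of f z 0 w] \<open>f z \<le> 0\<close> \<open>f w > 0\<close> False by auto
    then show thesis
      using that False by auto
  qed
  have "c \<in> {a<..<b}"
    using c w z by auto
  then show False
    using nonzero c(3) by blast
qed

lemma increment_bound_of_local:
  fixes \<Phi> \<Psi> :: "real \<Rightarrow> real"
  assumes "a \<le> b" "\<delta> > 0"
    and near: "\<And>s t. a \<le> s \<Longrightarrow> s \<le> t \<Longrightarrow> t \<le> b \<Longrightarrow> t - s < \<delta> \<Longrightarrow>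
      \<bar>\<Phi> t - \<Phi> s\<bar> \<le> \<Psi> t - \<Psi> s"
  shows "\<bar>\<Phi> b - \<Phi> a\<bar> \<le> \<Psi> b - \<Psi> a"
proof -
  have grow: "\<bar>\<Phi> t - \<Phi> a\<bar> \<le> \<Psi> t - \<Psi> a" if "a \<le> t" "t \<le> b" "t \<le> a + real n * (\<delta> / 2)" for n t
    using that
  proof (induction n arbitrary: t)
    case 0
    then show ?case by simp
  next
    case (Suc n)
    define m where "m = a + real n * (\<delta> / 2)"
    show ?case
    proof (cases "t \<le> m")
      case True
      then show ?thesis
        using Suc unfolding m_def by blast
    next
      case False
      have "a \<le> m"
        using \<open>\<delta> > 0\<close> unfolding m_def by simp
      have "t \<le> m + \<delta> / 2"
        using Suc.prems(3) unfolding m_def by (simp add: field_simps)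
      with \<open>\<delta> > 0\<close> have "t - m < \<delta>" by linarith
      have "\<bar>\<Phi> m - \<Phi> a\<bar> \<le> \<Psi> m - \<Psi> a"
        using Suc.prems False \<open>a \<le> m\<close> unfolding m_def by (intro Suc.IH) auto
      moreover have "\<bar>\<Phi> t - \<Phi> m\<bar> \<le> \<Psi> t - \<Psi> m"
        using Suc.prems False \<open>a \<le> m\<close> \<open>t - m < \<delta>\<close> by (intro near) auto
      ultimately show ?thesis by linarith
    qed
  qed
  obtain n where "b - a < real n * (\<delta> / 2)"
    using reals_Archimedean3 \<open>\<delta> > 0\<close> by (metis half_gt_zero)
  then have "b \<le> a + real n * (\<delta> / 2)" by simp
  then show ?thesis
    using grow \<open>a \<le> b\<close> by blast
qed

lemma divide_abs_add_one_mult_le: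
  fixes e c :: real
  assumes "e > 0"
  shows "e / (\<bar>c\<bar> + 1) * \<bar>c\<bar> \<le> e"
proof -
  have "e / (\<bar>c\<bar> + 1) * \<bar>c\<bar> \<le> e / (\<bar>c\<bar> + 1) * (\<bar>c\<bar> + 1)"
    using assms by (intro mult_left_mono) auto
  then show ?thesis
    by simp
qed

lemma abs_le_multiples_imp_zero:
  fixes x A :: real
  assumes "0 \<le> A" and small: "\<And>\<epsilon>. \<epsilon> > 0 \<Longrightarrow> \<bar>x\<bar> \<le> \<epsilon> * A"
  shows "x = 0"
proof -
  have "\<bar>x\<bar> \<le> 0 + e" if "e > 0" for e
  proof -
    have "\<bar>x\<bar> \<le> e / (\<bar>A\<bar> + 1) * \<bar>A\<bar>"
      using small[of "e / (\<bar>A\<bar> + 1)"] \<open>0 \<le> A\<close> that by simp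
    also have "\<dots> \<le> e"
      using that by (rule divide_abs_add_one_mult_le)
    finally show ?thesis
      by simp
  qed
  then show ?thesis
    using field_le_epsilon[of "\<bar>x\<bar>" 0] by simp
qed

lemma shift_of_int_mult:
  fixes F :: "'a::ring_1 \<Rightarrow> 'b::ring_1"
  assumes step: "\<And>x. F (x + d) = F x + c"
  shows "F (x + of_int m * d) = F x + of_int m * c"
proof (induction m rule: int_induct[where k = 0])
  case base
  then show ?case by simp
next
  case (step1 i)
  have "F (x + of_int (i + 1) * d) = F ((x + of_int i * d) + d)"
    by (simp add: algebra_simps)
  also have "\<dots> = F (x + of_int i * d) + c"
    by (rule step)
  finally show ?case
    using step1 by (simp add: algebra_simps)
next
  case (step2 i)
  have "F (x + of_int i * d) = F ((x + of_int (i - 1) * d) + d)"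
    by (simp add: algebra_simps)
  also have "\<dots> = F (x + of_int (i - 1) * d) + c"
    by (rule step)
  finally show ?case
    using step2 by (simp add: algebra_simps)
qed

lemma strict_mono_int_of_step:
  fixes F :: "int \<Rightarrow> 'a::order"
  assumes succ: "\<And>l. F l < F (l + 1)"
  shows "strict_mono F"
proof (rule strict_monoI)
  fix p q :: int assume "p < q"
  then show "F p < F q"
  proof (induction q rule: int_gr_induct)
    case base
    show ?case by (rule succ)
  next
    case (step q)
    show ?case by (rule less_trans[OF step.IH succ])
  qed
qed

lemma int_crossing:
  fixes F :: "int \<Rightarrow> real"
  assumes "a \<le> b" "F a \<le> x" "x < F b"
  obtains l where "F (l - 1) \<le> x" "x < F l"
proof -
  have "\<exists>l. F (l - 1) \<le> x \<and> x < F l" if "x < F (a + int d)" for d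
    using that
  proof (induction d)
    case 0
    then show ?case using \<open>F a \<le> x\<close> by simp
  next
    case (Suc d)
    show ?case
    proof (cases "F (a + int d) \<le> x")
      case True
      then show ?thesis
        using Suc.prems by (intro exI[of _ "a + int (Suc d)"]) simp
    next
      case False
      then show ?thesis
        using Suc.IH by simp
    qed
  qed
  from this[of "nat (b - a)"] show thesis
    using assms(1,3) that by auto
qed

lemma wrap_around_image:
  fixes i k :: int
  assumes i: "i \<in> {1..k}"
  shows "(\<lambda>j. if j < i then j + k else j) ` {1..k} = {i..<i + k}"
proof
  show "(\<lambda>j. if j < i then j + k else j) ` {1..k} \<subseteq> {i..<i + k}"
    using i by auto
  show "{i..<i + k} \<subseteq> (\<lambda>j. if j < i then j + k else j) ` {1..k}"
  proof
    fix g assume g: "g \<in> {i..<i + k}"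
    show "g \<in> (\<lambda>j. if j < i then j + k else j) ` {1..k}"
    proof (cases "g \<le> k")
      case True
      then show ?thesis
        using g i by (intro image_eqI[of _ _ g]) auto
    next
      case False
      then show ?thesis
        using g i by (intro image_eqI[of _ _ "g - k"]) auto
    qed
  qed
qed

lemma Inf_range_split:
  fixes F :: "int \<Rightarrow> real"
  assumes "bdd_below (range F)"
  shows "Inf (range F) = min (Inf (F ` {..l})) (Inf (F ` {l<..}))"
proof -
  have "(UNIV :: int set) = {..l} \<union> {l<..}"
    by auto
  then have "range F = F ` {..l} \<union> F ` {l<..}"
    by (metis image_Un)
  moreover have "bdd_below (F ` {..l})" "bdd_below (F ` {l<..})"
    using assms by (auto intro: bdd_below_mono)
  ultimately show ?thesis
    by (simp add: cInf_union_distrib inf_min)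
qed

lemma Inf_range_abs_diff_le:
  fixes f g :: "'a \<Rightarrow> real"
  assumes "bdd_below (range f)" "bdd_below (range g)" and close: "\<And>n. \<bar>f n - g n\<bar> \<le> E"
  shows "\<bar>Inf (range f) - Inf (range g)\<bar> \<le> E"
proof -
  have one_sided: "Inf (range f') \<le> Inf (range g') + E"
    if "bdd_below (range f')" "\<And>n. f' n \<le> g' n + E" for f' g' :: "'a \<Rightarrow> real"
  proof -
    have "Inf (range f') - E \<le> Inf (range g')"
    proof (rule cInf_greatest)
      fix v assume "v \<in> range g'"
      then obtain n where "v = g' n" by blast
      moreover have "Inf (range f') \<le> f' n"
        using that(1) by (rule cInf_lower[rotated]) simp
      ultimately show "Inf (range f') - E \<le> v"
        using that(2)[of n] by simp
    qed simp
    then show ?thesis by simp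
  qed
  have "f n \<le> g n + E" "g n \<le> f n + E" for n
    using close[of n] by (simp_all add: abs_le_iff)
  then have "Inf (range f) \<le> Inf (range g) + E" "Inf (range g) \<le> Inf (range f) + E"
    using assms(1,2) by (simp_all add: one_sided)
  then show ?thesis
    by (simp add: abs_le_iff)
qed

lemma smooth_fun_has_deriv:
  assumes "smooth_fun f"
  shows "(f has_real_derivative deriv f x) (at x)"
proof -
  have "((deriv ^^ 0) f) differentiable (at x)"
    using assms unfolding smooth_fun_def by blast
  then show ?thesis
    by (simp add: DERIV_deriv_iff_real_differentiable)
qed

lemma smooth_fun_deriv_continuous:
  assumes "smooth_fun f"
  shows "continuous_on UNIV (deriv f)"
proof -
  have "((deriv ^^ 1) f) differentiable (at x)" for x
    using assms unfolding smooth_fun_def by blast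
  then have "isCont (deriv f) x" for x
    by (simp add: differentiable_imp_continuous_within)
  then show ?thesis
    by (simp add: continuous_at_imp_continuous_on)
qed

lemma deriv_periodic_of_skew_periodic:
  assumes U: "\<And>x. (U has_real_derivative deriv U x) (at x)"
    and skew: "\<forall>x. U x = Ut x - b * x" and per: "\<forall>x. Ut (x + 1) = Ut x"
  shows "deriv U (x + 1) = deriv U x"
proof -
  have "U (z + 1) = U z - b" for z
    using skew[rule_format, of "z + 1"] skew[rule_format, of z] per[rule_format, of z]
    by (simp add: distrib_left)
  then have shift: "(\<lambda>z. U (z + 1)) = (\<lambda>z. U z - b)"
    by simp
  have "((\<lambda>z. U (z + 1)) has_real_derivative deriv U (x + 1) * 1) (at x)"
    by (rule DERIV_chain2[OF U]) (auto intro!: derivative_eq_intros)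
  moreover have "((\<lambda>z. U (z + 1)) has_real_derivative deriv U x) (at x)"
    unfolding shift using U[of x] by (auto intro!: derivative_eq_intros)
  ultimately show ?thesis
    using DERIV_unique by fastforce
qed

lemma continuous_periodic_bounded:
  fixes f :: "real \<Rightarrow> real"
  assumes "continuous_on UNIV f" and periodic: "\<And>x. f (x + 1) = f x"
  obtains M where "\<And>x. \<bar>f x\<bar> \<le> M"
proof -
  obtain M where M: "\<forall>y\<in>f ` {0..1}. norm y \<le> M"
    using compact_imp_bounded[OF compact_continuous_image[OF continuous_on_subset[OF assms(1)] compact_Icc]]
    unfolding bounded_iff by blast
  have shift: "f (y + of_int m * 1) = f y + of_int m * 0" for y m
    by (rule shift_of_int_mult) (simp add: periodic)
  have "f x = f (x - of_int \<lfloor>x\<rfloor>)" for x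
    using shift[of "x - of_int \<lfloor>x\<rfloor>" "\<lfloor>x\<rfloor>"] by simp
  moreover have "x - of_int \<lfloor>x\<rfloor> \<in> {0..1}" for x
    using floor_correct[of x] by simp
  then have "f (x - of_int \<lfloor>x\<rfloor>) \<in> f ` {0..1}" for x
    by (rule imageI)
  ultimately have "\<bar>f x\<bar> \<le> M" for x
    using M by fastforce
  then show thesis
    by (rule that)
qed

section \<open>Minima of two functions and viscosity inequalities\<close>

lemma differentiable_min_unless_tie:
  fixes W A B :: "real \<Rightarrow> real"
  assumes "open S" "z \<in> S" and W: "\<And>y. y \<in> S \<Longrightarrow> W y = min (A y) (B y)"
    and "continuous_on UNIV A" "continuous_on UNIV B"
    and "A differentiable (at z)" "B differentiable (at z)" and "A z \<noteq> B z"
  shows "W differentiable (at z)"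
proof -
  have *: "W differentiable (at z)"
    if less: "A' z < B' z" and cont: "continuous_on UNIV A'" "continuous_on UNIV B'"
      and diff: "A' differentiable (at z)" and W': "\<And>y. y \<in> S \<Longrightarrow> W y = min (A' y) (B' y)"
    for A' B' :: "real \<Rightarrow> real"
  proof -
    obtain d where d: "(A' has_real_derivative d) (at z)"
      using diff real_differentiable_def by blast
    have "open (S \<inter> {y. A' y < B' y})"
      by (intro open_Int open_Collect_less \<open>open S\<close> cont)
    then have "(W has_real_derivative d) (at z)"
      by (rule has_field_derivative_transform_within_open[OF d]) (use less W' assms(2) in auto)
    then show ?thesis
      using real_differentiable_def by blast
  qed
  show ?thesis
  proof (cases "A z < B z")
    case True
    then show ?thesis
      using assms by (intro *[of A B]) auto
  next
    case False
    then show ?thesis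
      using assms by (intro *[of B A]) (auto simp: min.commute)
  qed
qed

lemma deriv_eq_at_loc_extremum:
  fixes u \<phi> :: "real \<Rightarrow> real"
  assumes "(u has_real_derivative w) (at x)" "(\<phi> has_real_derivative p) (at x)"
    and "loc_max (\<lambda>y. u y - \<phi> y) x \<or> loc_min (\<lambda>y. u y - \<phi> y) x"
  shows "p = w"
proof -
  have d: "((\<lambda>y. u y - \<phi> y) has_real_derivative w - p) (at x)"
    using assms(1,2) by (rule DERIV_diff)
  from assms(3) show ?thesis
  proof
    assume "loc_max (\<lambda>y. u y - \<phi> y) x"
    then obtain e where "e > 0" "\<forall>y. \<bar>x - y\<bar> < e \<longrightarrow> u y - \<phi> y \<le> u x - \<phi> x"
      unfolding loc_max_def by (auto simp: abs_minus_commute)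
    from DERIV_local_max[OF d this] show ?thesis by simp
  next
    assume "loc_min (\<lambda>y. u y - \<phi> y) x"
    then obtain e where "e > 0" "\<forall>y. \<bar>x - y\<bar> < e \<longrightarrow> u x - \<phi> x \<le> u y - \<phi> y"
      unfolding loc_min_def by (auto simp: abs_minus_commute)
    from DERIV_local_min[OF d this] show ?thesis by simp
  qed
qed

lemma loc_max_min_deriv_between:
  fixes W A B \<phi> :: "real \<Rightarrow> real"
  assumes "open S" "x \<in> S" and W: "\<And>y. y \<in> S \<Longrightarrow> W y = min (A y) (B y)"
    and A: "(A has_real_derivative a) (at x)" and B: "(B has_real_derivative b) (at x)"
    and \<phi>: "(\<phi> has_real_derivative p) (at x)"
    and "loc_max (\<lambda>y. W y - \<phi> y) x"
  shows "min a b \<le> p \<and> p \<le> max a b"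
proof -
  obtain e0 where "e0 > 0" "ball x e0 \<subseteq> S"
    using \<open>open S\<close> \<open>x \<in> S\<close> openE by blast
  moreover obtain e1 where "e1 > 0" "\<And>y. \<bar>y - x\<bar> < e1 \<Longrightarrow> W y - \<phi> y \<le> W x - \<phi> x"
    using \<open>loc_max (\<lambda>y. W y - \<phi> y) x\<close> unfolding loc_max_def by blast
  ultimately obtain e where "e > 0" and e: "\<And>y. \<bar>y - x\<bar> < e \<Longrightarrow> y \<in> S \<and> W y - \<phi> y \<le> W x - \<phi> x"
    by (intro that[of "min e0 e1"]) (auto simp: dist_real_def abs_minus_commute subset_iff)
  \<comment> \<open>For p outside [min a b, max a b], A - phi and B - phi, hence W - phi, increase on one side of x.\<close>
  have no_gain: False
    if "d > 0" "\<bar>s\<bar> = 1"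
      and "\<And>h. 0 < h \<Longrightarrow> h < d \<Longrightarrow> A x - \<phi> x < A (x + s * h) - \<phi> (x + s * h)"
      and "\<And>h. 0 < h \<Longrightarrow> h < d \<Longrightarrow> B x - \<phi> x < B (x + s * h) - \<phi> (x + s * h)" for d s
  proof -
    define h where "h = min d e / 2"
    have "0 < h" "h < d" "\<bar>x + s * h - x\<bar> < e"
      using \<open>e > 0\<close> \<open>d > 0\<close> \<open>\<bar>s\<bar> = 1\<close> unfolding h_def by (auto simp: abs_mult)
    then show False
      using e[of x] e[of "x + s * h"] that(3,4)[of h] W \<open>e > 0\<close> by fastforce
  qed
  have A': "((\<lambda>y. A y - \<phi> y) has_real_derivative a - p) (at x)" and B': "((\<lambda>y. B y - \<phi> y) has_real_derivative b - p) (at x)"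
    using A B \<phi> by (auto intro: DERIV_diff)
  have "\<not> p < min a b"
  proof
    assume "p < min a b"
    then obtain d1 d2 where "d1 > 0" "d2 > 0"
      "\<And>h. 0 < h \<Longrightarrow> h < d1 \<Longrightarrow> A x - \<phi> x < A (x + h) - \<phi> (x + h)"
      "\<And>h. 0 < h \<Longrightarrow> h < d2 \<Longrightarrow> B x - \<phi> x < B (x + h) - \<phi> (x + h)"
      using DERIV_pos_inc_right[OF A'] DERIV_pos_inc_right[OF B'] by (metis diff_gt_0_iff_gt min_less_iff_conj)
    then show False
      by (intro no_gain[of "min d1 d2" 1]) auto
  qed
  moreover have "\<not> max a b < p"
  proof
    assume "max a b < p"
    then obtain d1 d2 where "d1 > 0" "d2 > 0"
      "\<And>h. 0 < h \<Longrightarrow> h < d1 \<Longrightarrow> A x - \<phi> x < A (x - h) - \<phi> (x - h)"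
      "\<And>h. 0 < h \<Longrightarrow> h < d2 \<Longrightarrow> B x - \<phi> x < B (x - h) - \<phi> (x - h)"
      using DERIV_neg_dec_left[OF A'] DERIV_neg_dec_left[OF B'] by (metis diff_less_0_iff_less max_less_iff_conj)
    then show False
      by (intro no_gain[of "min d1 d2" "- 1"]) auto
  qed
  ultimately show ?thesis
    by (meson not_less)
qed

lemma loc_min_min_deriv_cases:
  fixes W A B \<phi> :: "real \<Rightarrow> real"
  assumes "open S" "x \<in> S" and W: "\<And>y. y \<in> S \<Longrightarrow> W y = min (A y) (B y)"
    and A: "(A has_real_derivative a) (at x)" and B: "(B has_real_derivative b) (at x)"
    and \<phi>: "(\<phi> has_real_derivative p) (at x)"
    and "loc_min (\<lambda>y. W y - \<phi> y) x"
  shows "p = a \<or> p = b"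
proof -
  obtain e0 where "e0 > 0" "ball x e0 \<subseteq> S"
    using \<open>open S\<close> \<open>x \<in> S\<close> openE by blast
  moreover obtain e1 where "e1 > 0" "\<And>y. \<bar>y - x\<bar> < e1 \<Longrightarrow> W x - \<phi> x \<le> W y - \<phi> y"
    using \<open>loc_min (\<lambda>y. W y - \<phi> y) x\<close> unfolding loc_min_def by blast
  ultimately obtain e where "e > 0" and e: "\<And>y. \<bar>y - x\<bar> < e \<Longrightarrow> y \<in> S \<and> W x - \<phi> x \<le> W y - \<phi> y"
    by (intro that[of "min e0 e1"]) (auto simp: dist_real_def abs_minus_commute subset_iff)
  have "p = c" if "(C has_real_derivative c) (at x)" "W x = C x" "\<And>y. y \<in> S \<Longrightarrow> W y \<le> C y"
    for C c
  proof -
    have "loc_min (\<lambda>y. C y - \<phi> y) x"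
      unfolding loc_min_def using \<open>e > 0\<close> e that(2,3) by (metis diff_right_mono order_trans)
    then show ?thesis
      using deriv_eq_at_loc_extremum[OF that(1) \<phi>] by blast
  qed
  then show ?thesis
    using A B W[OF \<open>x \<in> S\<close>] W by (cases "A x \<le> B x") (auto simp: min_def)
qed

lemma mult_self_diff_nonpos_between:
  fixes p f :: real
  assumes "min 0 f \<le> p" "p \<le> max 0 f"
  shows "p * (p - f) \<le> 0"
proof (cases "0 \<le> f")
  case True
  then show ?thesis
    using assms by (intro mult_nonneg_nonpos) auto
next
  case False
  then show ?thesis
    using assms by (intro mult_nonpos_nonneg) auto
qed

lemma hamiltonian_sign_at_min:
  fixes W A B \<phi> :: "real \<Rightarrow> real"
  assumes "open S" "x \<in> S" "\<And>y. y \<in> S \<Longrightarrow> W y = min (A y) (B y)"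
    and "(A has_real_derivative a) (at x)" "(B has_real_derivative b) (at x)"
    and "(\<phi> has_real_derivative p) (at x)"
    and slopes: "(a = 0 \<and> b = f) \<or> (a = f \<and> b = 0)"
  shows "loc_max (\<lambda>y. W y - \<phi> y) x \<Longrightarrow> p * (p - f) \<le> 0"
    and "loc_min (\<lambda>y. W y - \<phi> y) x \<Longrightarrow> 0 \<le> p * (p - f)"
proof -
  show "p * (p - f) \<le> 0" if "loc_max (\<lambda>y. W y - \<phi> y) x"
    using loc_max_min_deriv_between[OF assms(1-6) that] slopes
    by (auto intro: mult_self_diff_nonpos_between simp: min.commute max.commute)
  show "0 \<le> p * (p - f)" if "loc_min (\<lambda>y. W y - \<phi> y) x"
    using loc_min_min_deriv_cases[OF assms(1-6) that] slopes by auto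
qed

section \<open>Absolutely continuous paths and their action\<close>

lemma set_integral_initial_segment:
  fixes g :: "real \<Rightarrow> real"
  assumes "set_integrable lborel {0..T} g" "t \<in> {0..T}"
  shows "g integrable_on {0..t}" "(LINT s:{0..t}|lborel. g s) = integral {0..t} g"
proof -
  have "set_integrable lborel {0..t} g"
    by (rule set_integrable_subset[OF assms(1)]) (use assms(2) in auto)
  then show "g integrable_on {0..t}" "(LINT s:{0..t}|lborel. g s) = integral {0..t} g"
    using set_borel_integral_eq_integral by auto
qed

lemma ac_path_integrable:
  assumes "ac_path T \<gamma> g"
  shows "set_integrable lborel {0..T} g"
  using assms unfolding ac_path_def by blast

(* The equation in ac_path must not become a simp rule: at t = 0 it rewrites \<gamma> 0 forever. *)
lemma ac_path_increment:
  assumes "ac_path T \<gamma> g" "t \<in> {0..T}"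
  shows "\<gamma> t - \<gamma> 0 = integral {0..t} g"
proof -
  have "\<gamma> t = \<gamma> 0 + (LINT s:{0..t}|lborel. g s)"
    using assms unfolding ac_path_def by blast
  then show ?thesis
    using set_integral_initial_segment(2)[OF ac_path_integrable[OF assms(1)] assms(2)] by simp
qed

lemma ac_path_continuous:
  assumes "ac_path T \<gamma> g" "0 \<le> T"
  shows "continuous_on {0..T} \<gamma>"
proof -
  have "g integrable_on {0..T}"
    using set_integral_initial_segment(1)[OF ac_path_integrable[OF assms(1)]] assms(2) by simp
  then have "continuous_on {0..T} (\<lambda>t. \<gamma> 0 + integral {0..t} g)"
    by (intro continuous_intros indefinite_integral_continuous_1)
  then show ?thesis
    by (rule continuous_on_eq) (use ac_path_increment[OF assms(1)] in force)
qed

lemma ac_path_of_derivative: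
  fixes \<gamma> g :: "real \<Rightarrow> real"
  assumes "0 \<le> T" and \<gamma>: "continuous_on {0..T} \<gamma>" and "finite S"
    and deriv: "\<And>t. t \<in> {0<..<T} - S \<Longrightarrow> (\<gamma> has_real_derivative g t) (at t)"
    and g: "set_integrable lborel {0..T} g"
  shows "ac_path T \<gamma> g"
  unfolding ac_path_def
proof (intro conjI g ballI)
  fix t assume t: "t \<in> {0..T}"
  have "(g has_integral (\<gamma> t - \<gamma> 0)) {0..t}"
  proof (rule fundamental_theorem_of_calculus_interior_strong[OF \<open>finite S\<close>])
    show "0 \<le> t"
      using t by simp
    show "continuous_on {0..t} \<gamma>"
      using t by (intro continuous_on_subset[OF \<gamma>]) auto
    show "(\<gamma> has_vector_derivative g x) (at x)" if "x \<in> {0<..<t} - S" for x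
      using deriv[of x] that t by (simp add: has_real_derivative_iff_has_vector_derivative)
  qed
  then have "integral {0..t} g = \<gamma> t - \<gamma> 0"
    by (rule integral_unique)
  then show "\<gamma> t = \<gamma> 0 + (LINT s:{0..t}|lborel. g s)"
    using set_integral_initial_segment(2)[OF g t] by simp
qed

lemma set_integrable_mult_continuous:
  fixes g h :: "real \<Rightarrow> real"
  assumes g: "set_integrable lborel {a..b} g" and h: "continuous_on {a..b} h"
  shows "set_integrable lborel {a..b} (\<lambda>t. g t * h t)"
proof -
  obtain B where B: "\<And>t. t \<in> {a..b} \<Longrightarrow> \<bar>h t\<bar> \<le> B"
    using compact_imp_bounded[OF compact_continuous_image[OF h compact_Icc]]
    unfolding bounded_iff by fastforce
  have "(\<lambda>t. indicator {a..b} t *\<^sub>R g t) \<in> borel_measurable lborel"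
    using g unfolding set_integrable_def by auto
  moreover have "(\<lambda>t. indicator {a..b} t *\<^sub>R h t) \<in> borel_measurable lborel"
    using borel_measurable_continuous_on_indicator[OF _ h] by simp
  moreover have "(\<lambda>t. indicator {a..b} t *\<^sub>R (g t * h t)) =
      (\<lambda>t. (indicator {a..b} t *\<^sub>R g t) * (indicator {a..b} t *\<^sub>R h t))"
    by (rule ext) (simp split: split_indicator)
  ultimately have measurable: "set_borel_measurable lborel {a..b} (\<lambda>t. g t * h t)"
    unfolding set_borel_measurable_def by simp
  have bound: "norm (g t * h t) \<le> norm (B * g t)" if "t \<in> {a..b}" for t
  proof -
    have "\<bar>g t\<bar> * \<bar>h t\<bar> \<le> \<bar>g t\<bar> * B"
      using B[OF that] by (intro mult_left_mono) auto
    moreover have "0 \<le> B"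
      using B[OF that] by linarith
    ultimately show ?thesis
      by (simp add: abs_mult mult.commute)
  qed
  show ?thesis
  proof (rule set_integrable_bound[OF _ measurable])
    show "set_integrable lborel {a..b} (\<lambda>t. B * g t)"
      using g by simp
    show "AE t in lborel. t \<in> {a..b} \<longrightarrow> norm (g t * h t) \<le> norm (B * g t)"
      using bound by (intro AE_I2 impI)
  qed
qed

lemma oscillation_along_path_small:
  fixes \<gamma> F' :: "real \<Rightarrow> real"
  assumes \<gamma>: "continuous_on {0..T} \<gamma>" and F': "continuous_on UNIV F'" and "\<epsilon> > 0"
  obtains \<delta> where "\<delta> > 0"
    "\<And>s t r \<xi>. 0 \<le> s \<Longrightarrow> s \<le> r \<Longrightarrow> r \<le> t \<Longrightarrow> t \<le> T \<Longrightarrow> t - s < \<delta> \<Longrightarrow>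
      min (\<gamma> s) (\<gamma> t) \<le> \<xi> \<Longrightarrow> \<xi> \<le> max (\<gamma> s) (\<gamma> t) \<Longrightarrow> \<bar>F' \<xi> - F' (\<gamma> r)\<bar> \<le> \<epsilon>"
proof -
  obtain R where R: "\<And>t. t \<in> {0..T} \<Longrightarrow> \<bar>\<gamma> t\<bar> \<le> R"
    using compact_imp_bounded[OF compact_continuous_image[OF \<gamma> compact_Icc]]
    unfolding bounded_iff by fastforce
  have "uniformly_continuous_on {-R..R} F'"
    by (rule compact_uniformly_continuous[OF continuous_on_subset[OF F']]) auto
  then obtain \<eta> where "\<eta> > 0" and \<eta>: "\<And>z z'. z \<in> {-R..R} \<Longrightarrow> z' \<in> {-R..R} \<Longrightarrow>
      dist z' z < \<eta> \<Longrightarrow> dist (F' z') (F' z) < \<epsilon>"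
    unfolding uniformly_continuous_on_def using \<open>\<epsilon> > 0\<close> by metis
  have "uniformly_continuous_on {0..T} \<gamma>"
    by (rule compact_uniformly_continuous[OF \<gamma>]) auto
  then obtain \<delta> where "\<delta> > 0" and \<delta>: "\<And>s t. s \<in> {0..T} \<Longrightarrow> t \<in> {0..T} \<Longrightarrow>
      dist t s < \<delta> \<Longrightarrow> dist (\<gamma> t) (\<gamma> s) < \<eta>"
    unfolding uniformly_continuous_on_def using \<open>\<eta> > 0\<close> by metis
  show thesis
  proof (rule that[OF \<open>\<delta> > 0\<close>])
    fix s t r \<xi>
    assume st: "0 \<le> s" "s \<le> r" "r \<le> t" "t \<le> T" "t - s < \<delta>"
      and \<xi>: "min (\<gamma> s) (\<gamma> t) \<le> \<xi>" "\<xi> \<le> max (\<gamma> s) (\<gamma> t)"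
    have "\<bar>\<gamma> r - \<gamma> s\<bar> < \<eta>" "\<bar>\<gamma> r - \<gamma> t\<bar> < \<eta>"
      using \<delta>[of s r] \<delta>[of t r] st by (auto simp: dist_real_def)
    then have "dist \<xi> (\<gamma> r) < \<eta>"
      using \<xi> by (auto simp: dist_real_def abs_less_iff min_le_iff_disj le_max_iff_disj)
    moreover have "\<xi> \<in> {-R..R}" "\<gamma> r \<in> {-R..R}"
      using R[of s] R[of t] R[of r] \<xi> st by (auto simp: abs_le_iff min_le_iff_disj le_max_iff_disj)
    ultimately have "dist (F' \<xi>) (F' (\<gamma> r)) < \<epsilon>"
      using \<eta>[of "\<gamma> r" \<xi>] by blast
    then show "\<bar>F' \<xi> - F' (\<gamma> r)\<bar> \<le> \<epsilon>"
      by (simp add: dist_real_def)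
  qed
qed

lemma ac_path_chain_rule_local:
  fixes F F' :: "real \<Rightarrow> real"
  assumes T: "0 \<le> T" and \<gamma>: "ac_path T \<gamma> g"
    and F: "\<And>z. (F has_real_derivative F' z) (at z)" and F': "continuous_on UNIV F'"
    and "\<epsilon> > 0"
  obtains \<delta> where "\<delta> > 0"
    "\<And>s t. 0 \<le> s \<Longrightarrow> s \<le> t \<Longrightarrow> t \<le> T \<Longrightarrow> t - s < \<delta> \<Longrightarrow>
      \<bar>F (\<gamma> t) - F (\<gamma> s) - integral {s..t} (\<lambda>r. g r * F' (\<gamma> r))\<bar>
        \<le> \<epsilon> * integral {s..t} (\<lambda>r. \<bar>g r\<bar>)"
proof -
  let ?k = "\<lambda>r. g r * F' (\<gamma> r)"
  have c\<gamma>: "continuous_on {0..T} \<gamma>"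
    by (rule ac_path_continuous[OF \<gamma> T])
  obtain \<delta> where "\<delta> > 0" and oscillation: "\<And>s t r \<xi>. 0 \<le> s \<Longrightarrow> s \<le> r \<Longrightarrow> r \<le> t \<Longrightarrow> t \<le> T \<Longrightarrow>
      t - s < \<delta> \<Longrightarrow> min (\<gamma> s) (\<gamma> t) \<le> \<xi> \<Longrightarrow> \<xi> \<le> max (\<gamma> s) (\<gamma> t) \<Longrightarrow> \<bar>F' \<xi> - F' (\<gamma> r)\<bar> \<le> \<epsilon>"
    using oscillation_along_path_small[OF c\<gamma> F' \<open>\<epsilon> > 0\<close>] by blast
  have g: "set_integrable lborel {0..T} g"
    using \<gamma> by (rule ac_path_integrable)
  have k: "set_integrable lborel {0..T} ?k"
    using g by (intro set_integrable_mult_continuous continuous_on_compose2[OF F' c\<gamma>]) auto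
  have integrable: "g integrable_on {0..T}" "?k integrable_on {0..T}" "(\<lambda>r. \<bar>g r\<bar>) integrable_on {0..T}"
    using set_integral_initial_segment(1)[OF g] set_integral_initial_segment(1)[OF k]
      set_integral_initial_segment(1)[OF set_integrable_abs[OF g]] T by auto
  show thesis
  proof (rule that[OF \<open>\<delta> > 0\<close>])
    fix s t assume st: "0 \<le> s" "s \<le> t" "t \<le> T" "t - s < \<delta>"
    have sub: "f integrable_on {s..t}" if "f integrable_on {0..T}" for f :: "real \<Rightarrow> real"
      using st by (intro integrable_on_subinterval[OF that]) auto
    obtain \<xi> where \<xi>: "min (\<gamma> s) (\<gamma> t) \<le> \<xi>" "\<xi> \<le> max (\<gamma> s) (\<gamma> t)"
      "F (\<gamma> t) - F (\<gamma> s) = (\<gamma> t - \<gamma> s) * F' \<xi>"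
      using MVT_unordered[OF F] by blast
    have "\<gamma> t - \<gamma> s = integral {s..t} g"
      using ac_path_increment[OF \<gamma>, of s] ac_path_increment[OF \<gamma>, of t] st
        Henstock_Kurzweil_Integration.integral_combine[of 0 s t g]
        integrable_on_subinterval[OF integrable(1), of 0 t] by auto
    then have "F (\<gamma> t) - F (\<gamma> s) - integral {s..t} ?k = integral {s..t} (\<lambda>r. g r * (F' \<xi> - F' (\<gamma> r)))"
      using \<xi>(3) integral_diff[OF integrable_on_mult_left[OF sub[OF integrable(1)]] sub[OF integrable(2)]]
      by (simp add: right_diff_distrib)
    also have "\<bar>\<dots>\<bar> \<le> integral {s..t} (\<lambda>r. \<epsilon> * \<bar>g r\<bar>)"
      unfolding real_norm_def[symmetric]
    proof (rule Henstock_Kurzweil_Integration.integral_norm_bound_integral)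
      show "(\<lambda>r. g r * (F' \<xi> - F' (\<gamma> r))) integrable_on {s..t}"
        using integrable_diff[OF integrable_on_mult_left[OF sub[OF integrable(1)]] sub[OF integrable(2)]]
        by (simp add: right_diff_distrib)
      show "(\<lambda>r. \<epsilon> * norm (g r)) integrable_on {s..t}"
        using integrable_on_mult_right[OF sub[OF integrable(3)]] by simp
      fix r assume "r \<in> {s..t}"
      then have "\<bar>F' \<xi> - F' (\<gamma> r)\<bar> \<le> \<epsilon>"
        using oscillation[of s r t \<xi>] st \<xi>(1,2) by simp
      then have "\<bar>g r\<bar> * \<bar>F' \<xi> - F' (\<gamma> r)\<bar> \<le> \<bar>g r\<bar> * \<epsilon>"
        by (rule mult_left_mono) simp
      then show "norm (g r * (F' \<xi> - F' (\<gamma> r))) \<le> \<epsilon> * norm (g r)"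
        by (simp add: abs_mult mult.commute)
    qed
    finally show "\<bar>F (\<gamma> t) - F (\<gamma> s) - integral {s..t} ?k\<bar> \<le> \<epsilon> * integral {s..t} (\<lambda>r. \<bar>g r\<bar>)"
      by simp
  qed
qed

lemma ac_path_chain_rule:
  fixes F F' :: "real \<Rightarrow> real"
  assumes T: "0 \<le> T" and \<gamma>: "ac_path T \<gamma> g"
    and F: "\<And>z. (F has_real_derivative F' z) (at z)" and F': "continuous_on UNIV F'"
  shows "set_integrable lborel {0..T} (\<lambda>t. g t * F' (\<gamma> t))"
    and "F (\<gamma> T) - F (\<gamma> 0) = (LINT t:{0..T}|lborel. g t * F' (\<gamma> t))"
proof -
  let ?k = "\<lambda>t. g t * F' (\<gamma> t)"
  have g: "set_integrable lborel {0..T} g"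
    using \<gamma> by (rule ac_path_integrable)
  show k: "set_integrable lborel {0..T} ?k"
    using g by (intro set_integrable_mult_continuous continuous_on_compose2[OF F' ac_path_continuous[OF \<gamma> T]]) auto
  have integrable: "?k integrable_on {0..T}" "(\<lambda>r. \<bar>g r\<bar>) integrable_on {0..T}"
    using set_integral_initial_segment(1)[OF k] set_integral_initial_segment(1)[OF set_integrable_abs[OF g]] T
    by auto
  define \<Phi> where "\<Phi> t = F (\<gamma> t) - integral {0..t} ?k" for t
  define A where "A t = integral {0..t} (\<lambda>r. \<bar>g r\<bar>)" for t
  have estimate: "\<bar>\<Phi> T - \<Phi> 0\<bar> \<le> \<epsilon> * A T" if \<epsilon>: "\<epsilon> > 0" for \<epsilon>
  proof -
    obtain \<delta> where "\<delta> > 0" and near: "\<And>s t. 0 \<le> s \<Longrightarrow> s \<le> t \<Longrightarrow> t \<le> T \<Longrightarrow> t - s < \<delta> \<Longrightarrow>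
        \<bar>F (\<gamma> t) - F (\<gamma> s) - integral {s..t} ?k\<bar> \<le> \<epsilon> * integral {s..t} (\<lambda>r. \<bar>g r\<bar>)"
      using ac_path_chain_rule_local[OF T \<gamma> F F' \<epsilon>] by blast
    have "\<bar>\<Phi> T - \<Phi> 0\<bar> \<le> \<epsilon> * A T - \<epsilon> * A 0"
    proof (rule increment_bound_of_local[OF T \<open>\<delta> > 0\<close>])
      fix s t assume st: "0 \<le> s" "s \<le> t" "t \<le> T" "t - s < \<delta>"
      have combine: "integral {0..s} f + integral {s..t} f = integral {0..t} f"
        if "f integrable_on {0..T}" for f :: "real \<Rightarrow> real"
        using st by (intro Henstock_Kurzweil_Integration.integral_combine integrable_on_subinterval[OF that]) auto
      have "\<Phi> t - \<Phi> s = F (\<gamma> t) - F (\<gamma> s) - integral {s..t} ?k"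
        using combine[OF integrable(1)] unfolding \<Phi>_def by linarith
      moreover have "A t - A s = integral {s..t} (\<lambda>r. \<bar>g r\<bar>)"
        using combine[OF integrable(2)] unfolding A_def by linarith
      ultimately show "\<bar>\<Phi> t - \<Phi> s\<bar> \<le> \<epsilon> * A t - \<epsilon> * A s"
        using near[OF st] by (simp add: right_diff_distrib[symmetric])
    qed
    then show ?thesis
      unfolding A_def by simp
  qed
  have "A T \<ge> 0"
    unfolding A_def by (rule integral_nonneg[OF integrable(2)]) simp
  have "\<Phi> T - \<Phi> 0 = 0"
    using \<open>A T \<ge> 0\<close> estimate by (rule abs_le_multiples_imp_zero)
  then show "F (\<gamma> T) - F (\<gamma> 0) = (LINT t:{0..T}|lborel. g t * F' (\<gamma> t))"
    using set_integral_initial_segment(2)[OF k, of T] T unfolding \<Phi>_def by simp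
qed

lemma set_integral_le_set_nn_integral:
  fixes k L :: "real \<Rightarrow> real"
  assumes k: "set_integrable lborel A k" and le: "\<And>t. t \<in> A \<Longrightarrow> k t \<le> L t"
  shows "ennreal (LINT t:A|lborel. k t) \<le> (\<integral>\<^sup>+t. ennreal (L t) * indicator A t \<partial>lborel)"
proof -
  define k' where "k' t = indicator A t *\<^sub>R k t" for t
  have k': "integrable lborel k'"
    using k unfolding set_integrable_def k'_def .
  have "(LINT t:A|lborel. k t) \<le> integral\<^sup>L lborel (\<lambda>t. max 0 (k' t))"
    unfolding set_lebesgue_integral_def k'_def[symmetric] using k' by (intro integral_mono) auto
  then have "ennreal (LINT t:A|lborel. k t) \<le> ennreal (integral\<^sup>L lborel (\<lambda>t. max 0 (k' t)))"
    by (rule ennreal_leI)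
  also have "\<dots> = (\<integral>\<^sup>+t. ennreal (max 0 (k' t)) \<partial>lborel)"
    using k' by (intro nn_integral_eq_integral[symmetric]) auto
  also have "\<dots> \<le> (\<integral>\<^sup>+t. ennreal (L t) * indicator A t \<partial>lborel)"
  proof (intro nn_integral_mono)
    fix t
    show "ennreal (max 0 (k' t)) \<le> ennreal (L t) * indicator A t"
    proof (cases "t \<in> A")
      case True
      then have "ennreal (max 0 (k' t)) \<le> ennreal (max 0 (L t))"
        using le[OF True] unfolding k'_def by (intro ennreal_leI) simp
      then show ?thesis
        using True by (simp add: ennreal_max_0)
    qed (simp add: k'_def)
  qed
  finally show ?thesis .
qed

lemma set_nn_integral_le_set_integral:
  fixes k L :: "real \<Rightarrow> real"
  assumes k: "set_integrable lborel A k"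
    and nonneg: "\<And>t. t \<in> A \<Longrightarrow> 0 \<le> L t" and le: "\<And>t. t \<in> A \<Longrightarrow> L t \<le> k t"
  shows "(\<integral>\<^sup>+t. ennreal (L t) * indicator A t \<partial>lborel) \<le> ennreal (LINT t:A|lborel. k t)"
proof -
  define k' where "k' t = indicator A t *\<^sub>R k t" for t
  have k': "integrable lborel k'"
    using k unfolding set_integrable_def k'_def .
  have "0 \<le> k' t" for t
    using nonneg[of t] le[of t] unfolding k'_def by (cases "t \<in> A") auto
  have "(\<integral>\<^sup>+t. ennreal (L t) * indicator A t \<partial>lborel) \<le> (\<integral>\<^sup>+t. ennreal (k' t) \<partial>lborel)"
    using le unfolding k'_def by (intro nn_integral_mono) (auto intro: ennreal_leI split: split_indicator)
  also have "\<dots> = ennreal (integral\<^sup>L lborel k')"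
    using k' \<open>\<And>t. 0 \<le> k' t\<close> by (intro nn_integral_eq_integral) auto
  also have "integral\<^sup>L lborel k' = (LINT t:A|lborel. k t)"
    unfolding set_lebesgue_integral_def k'_def ..
  finally show ?thesis .
qed

lemma action_ge_of_pointwise:
  fixes F F' :: "real \<Rightarrow> real"
  assumes "0 \<le> T" "ac_path T \<gamma> g"
    and "\<And>z. (F has_real_derivative F' z) (at z)" "continuous_on UNIV F'"
    and le: "\<And>t. t \<in> {0..T} \<Longrightarrow> g t * F' (\<gamma> t) \<le> Lag U (g t) (\<gamma> t)"
  shows "ennreal (F (\<gamma> T) - F (\<gamma> 0)) \<le> action U T \<gamma> g"
  unfolding action_def ac_path_chain_rule(2)[OF assms(1-4)]
  by (rule set_integral_le_set_nn_integral[OF ac_path_chain_rule(1)[OF assms(1-4)] le])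

lemma action_le_of_pointwise:
  fixes F F' :: "real \<Rightarrow> real"
  assumes "0 \<le> T" "ac_path T \<gamma> g"
    and "\<And>z. (F has_real_derivative F' z) (at z)" "continuous_on UNIV F'"
    and le: "\<And>t. t \<in> {0..T} \<Longrightarrow> Lag U (g t) (\<gamma> t) \<le> g t * F' (\<gamma> t)"
  shows "action U T \<gamma> g \<le> ennreal (F (\<gamma> T) - F (\<gamma> 0))"
  unfolding action_def ac_path_chain_rule(2)[OF assms(1-4)]
  by (rule set_nn_integral_le_set_integral[OF ac_path_chain_rule(1)[OF assms(1-4)] _ le])
    (simp add: Lag_def)

lemma pos_part_mult_le_Lag:
  fixes s f :: real
  shows "s * max 0 f \<le> (s + f)\<^sup>2 / 4" and "- (s * max 0 (- f)) \<le> (s + f)\<^sup>2 / 4"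
proof -
  have "s * f \<le> (s + f)\<^sup>2 / 4"
    using zero_le_power2[of "s - f"] by (simp add: power2_eq_square algebra_simps)
  then show "s * max 0 f \<le> (s + f)\<^sup>2 / 4" "- (s * max 0 (- f)) \<le> (s + f)\<^sup>2 / 4"
    by (auto simp: max_def)
qed

lemma Lag_at_flow_speed_le:
  fixes f \<delta> :: real
  assumes "\<delta> > 0"
  shows "((\<bar>f\<bar> + \<delta>) + f)\<^sup>2 / 4 \<le> (\<bar>f\<bar> + \<delta>) * (max 0 f + \<delta>)"
proof (cases "0 \<le> f")
  case True
  have "((\<bar>f\<bar> + \<delta>) + f)\<^sup>2 / 4 = f * f + f * \<delta> + \<delta> * \<delta> / 4"
    using True by (simp add: power2_eq_square field_simps)
  also have "\<dots> \<le> f * f + 2 * (f * \<delta>) + \<delta> * \<delta>"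
    using True assms by simp
  also have "\<dots> = (\<bar>f\<bar> + \<delta>) * (max 0 f + \<delta>)"
    using True by (simp add: algebra_simps)
  finally show ?thesis .
next
  case False
  have "f * \<delta> < 0"
    using False assms by (intro mult_neg_pos) auto
  have "((\<bar>f\<bar> + \<delta>) + f)\<^sup>2 / 4 = \<delta> * \<delta> / 4"
    using False by (simp add: power2_eq_square)
  also have "\<dots> \<le> \<delta> * \<delta> - f * \<delta>"
    using \<open>f * \<delta> < 0\<close> zero_le_square[of \<delta>] by linarith
  also have "\<dots> = (\<bar>f\<bar> + \<delta>) * (max 0 f + \<delta>)"
    using False by (simp add: algebra_simps)
  finally show ?thesis .
qed

section \<open>Paths that rest and then follow a flow\<close>

lemma strict_mono_surj_of_deriv_ge:
  fixes R R' :: "real \<Rightarrow> real"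
  assumes R: "\<And>z. (R has_real_derivative R' z) (at z)" and "c > 0" and lower: "\<And>z. c \<le> R' z"
  shows "strict_mono R" "surj R"
proof -
  have grow: "c * (b - a) \<le> R b - R a" if "a \<le> b" for a b
  proof -
    obtain \<xi> where "R b - R a = (b - a) * R' \<xi>"
      using MVT_unordered[OF R, of a b] by blast
    moreover have "c * (b - a) \<le> R' \<xi> * (b - a)"
      using that lower[of \<xi>] by (intro mult_right_mono) auto
    ultimately show ?thesis
      by (simp add: mult.commute)
  qed
  show "strict_mono R"
  proof (rule strict_monoI)
    fix a b :: real assume "a < b"
    then show "R a < R b"
      using grow[of a b] mult_pos_pos[OF \<open>c > 0\<close>, of "b - a"] by simp
  qed
  show "surj R"
  proof (rule surjI)
    fix t
    define d where "d = \<bar>t - R 0\<bar> / c"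
    have "0 \<le> d" "c * d = \<bar>t - R 0\<bar>"
      using \<open>c > 0\<close> unfolding d_def by simp_all
    moreover have "c * d \<le> R 0 - R (- d)" "c * d \<le> R d - R 0"
      using grow[of "- d" 0] grow[of 0 d] \<open>0 \<le> d\<close> by simp_all
    ultimately have "R (- d) \<le> t" "t \<le> R d" "- d \<le> d"
      using abs_ge_self[of "t - R 0"] abs_ge_minus_self[of "t - R 0"] by linarith+
    moreover have "continuous_on {- d..d} R"
      using R by (meson DERIV_isCont continuous_at_imp_continuous_on)
    ultimately have "\<exists>z. - d \<le> z \<and> z \<le> d \<and> R z = t"
      by (intro IVT') auto
    then show "R (inv R t) = t"
      by (metis f_inv_into_f rangeI)
  qed
qed

lemma antiderivative_of_reciprocal:
  fixes V :: "real \<Rightarrow> real"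
  assumes V: "continuous_on UNIV V" and "\<delta> > 0"
    and lower: "\<And>z. \<delta> \<le> V z" and upper: "\<And>z. V z \<le> K"
  obtains R where "\<And>z. (R has_real_derivative 1 / V z) (at z)" "R x = 0" "strict_mono R" "surj R"
proof -
  have V_pos: "V z > 0" for z
    using lower[of z] \<open>\<delta> > 0\<close> by linarith
  have "continuous_on UNIV (\<lambda>z. 1 / V z)"
    using V_pos by (intro continuous_intros V) (auto simp: less_imp_neq[symmetric])
  then obtain R0 where R0: "\<And>z. (R0 has_real_derivative 1 / V z) (at z)"
    by (rule continuous_has_real_antiderivative) blast
  define R where "R z = R0 z - R0 x" for z
  have R: "(R has_real_derivative 1 / V z) (at z)" for z
    unfolding R_def using R0[of z] by (auto intro!: derivative_eq_intros)
  have "K > 0"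
    using upper[of 0] V_pos[of 0] by linarith
  moreover have "1 / K \<le> 1 / V z" for z
    using upper[of z] V_pos[of z] by (intro divide_left_mono) auto
  ultimately have "strict_mono R" "surj R"
    using strict_mono_surj_of_deriv_ge[OF R, of "1 / K"] by auto
  moreover have "R x = 0"
    unfolding R_def by simp
  ultimately show thesis
    using R that by blast
qed

lemma flow_of_positive_field:
  fixes V :: "real \<Rightarrow> real"
  assumes V: "continuous_on UNIV V" and "\<delta> > 0"
    and lower: "\<And>z. \<delta> \<le> V z" and upper: "\<And>z. V z \<le> K"
  obtains \<Gamma> where "\<Gamma> 0 = x" "\<And>t. (\<Gamma> has_real_derivative V (\<Gamma> t)) (at t)"
    "surj \<Gamma>" "strict_mono \<Gamma>"
proof -
  obtain R where R: "\<And>z. (R has_real_derivative 1 / V z) (at z)" and "R x = 0" "strict_mono R" "surj R"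
    using antiderivative_of_reciprocal[OF assms] by blast
  have V_pos: "V z > 0" for z
    using lower[of z] \<open>\<delta> > 0\<close> by linarith
  define \<Gamma> where "\<Gamma> = inv R"
  have R\<Gamma>: "R (\<Gamma> t) = t" for t
    unfolding \<Gamma>_def using \<open>surj R\<close> by (rule surj_f_inv_f)
  have \<Gamma>R: "\<Gamma> (R z) = z" for z
    unfolding \<Gamma>_def using strict_mono_imp_inj_on[OF \<open>strict_mono R\<close>] by (rule inv_f_f)
  have "continuous_on UNIV R"
    using R by (meson DERIV_isCont continuous_at_imp_continuous_on)
  then have isCont_\<Gamma>: "isCont \<Gamma> t" for t
    using isCont_inverse_function[where d = 1 and x = "\<Gamma> t" and f = R and g = \<Gamma>] \<Gamma>R R\<Gamma>
    by (simp add: continuous_on_eq_continuous_at)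
  have "(\<Gamma> has_real_derivative inverse (1 / V (\<Gamma> t))) (at t)" for t
    by (rule DERIV_inverse_function[where g = \<Gamma> and x = t and a = "t - 1" and b = "t + 1"])
      (use R R\<Gamma> V_pos isCont_\<Gamma> in \<open>auto simp: less_imp_neq[symmetric]\<close>)
  then have "(\<Gamma> has_real_derivative V (\<Gamma> t)) (at t)" for t
    by simp
  moreover have "\<Gamma> 0 = x"
    using \<Gamma>R[of x] \<open>R x = 0\<close> by simp
  moreover have "surj \<Gamma>"
    using \<Gamma>R by (rule surjI)
  moreover have "strict_mono \<Gamma>"
    by (rule strict_monoI) (metis R\<Gamma> \<open>strict_mono R\<close> strict_mono_less)
  ultimately show thesis
    using that by blast
qed

lemma set_integrable_delayed:
  fixes v :: "real \<Rightarrow> real"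
  assumes v: "continuous_on UNIV v"
  shows "set_integrable lborel {0..T} (\<lambda>t. if t \<le> s then 0 else v (t - s))"
proof -
  obtain B where B: "\<And>r. r \<in> {- \<bar>s\<bar>..T + \<bar>s\<bar>} \<Longrightarrow> \<bar>v r\<bar> \<le> B"
    using compact_imp_bounded[OF compact_continuous_image[OF continuous_on_subset[OF v] compact_Icc]]
    unfolding bounded_iff by fastforce
  have "continuous_on UNIV (\<lambda>t. v (t - s))"
    by (rule continuous_on_compose2[OF v]) (auto intro!: continuous_intros)
  from borel_measurable_continuous_onI[OF this]
  have "(\<lambda>t. indicator {s<..} t * v (t - s)) \<in> borel_measurable borel"
    by measurable
  moreover have "(\<lambda>t. if t \<le> s then 0 else v (t - s)) = (\<lambda>t. indicator {s<..} t * v (t - s))"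
    by (rule ext) (simp split: split_indicator)
  ultimately have "(\<lambda>t. if t \<le> s then 0 else v (t - s)) \<in> borel_measurable lborel"
    by simp
  moreover have "norm (if t \<le> s then 0 else v (t - s)) \<le> max 0 B" if "t \<in> {0..T}" for t
    using B[of "t - s"] that by (cases "0 \<le> s") (auto simp: le_max_iff_disj)
  ultimately show ?thesis
    unfolding set_integrable_def
    by (intro integrableI_bounded_set_indicator[where B = "max 0 B"] AE_I2) (auto simp: emeasure_lborel_Icc_eq)
qed

lemma ac_path_wait_then_move:
  fixes \<Gamma> v :: "real \<Rightarrow> real"
  assumes \<Gamma>: "\<And>t. (\<Gamma> has_real_derivative v t) (at t)" and v: "continuous_on UNIV v"
    and "0 \<le> \<tau>" "\<tau> \<le> T"
  shows "ac_path T (\<lambda>t. \<Gamma> (max 0 (t - (T - \<tau>)))) (\<lambda>t. if t \<le> T - \<tau> then 0 else v (t - (T - \<tau>)))"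
proof -
  define s where "s = T - \<tau>"
  define g where "g = (\<lambda>t. if t \<le> s then 0 else v (t - s))"
  have "continuous_on UNIV \<Gamma>"
    using \<Gamma> by (meson DERIV_isCont continuous_at_imp_continuous_on)
  then have continuous: "continuous_on {0..T} (\<lambda>t. \<Gamma> (max 0 (t - s)))"
    by (rule continuous_on_compose2) (auto intro!: continuous_intros)
  have "ac_path T (\<lambda>t. \<Gamma> (max 0 (t - s))) g"
  proof (rule ac_path_of_derivative[OF _ continuous _ _ set_integrable_delayed[OF v, where T = T and s = s, folded g_def]])
    show "0 \<le> T" "finite {s}"
      using \<open>0 \<le> \<tau>\<close> \<open>\<tau> \<le> T\<close> by simp_all
    fix t assume "t \<in> {0<..<T} - {s}"
    then consider "t < s" | "s < t"
      by fastforce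
    then show "((\<lambda>t. \<Gamma> (max 0 (t - s))) has_real_derivative g t) (at t)"
    proof cases
      case 1
      have "((\<lambda>t. \<Gamma> (max 0 (t - s))) has_real_derivative 0) (at t)"
        by (rule has_field_derivative_transform_within_open[of "\<lambda>t. \<Gamma> 0" 0 t "{..<s}"])
          (use 1 in auto)
      then show ?thesis
        using 1 unfolding g_def by simp
    next
      case 2
      have "((\<lambda>t. \<Gamma> (t - s)) has_real_derivative v (t - s) * 1) (at t)"
        by (rule DERIV_chain2[OF \<Gamma>]) (auto intro!: derivative_eq_intros)
      then have "((\<lambda>t. \<Gamma> (t - s)) has_real_derivative v (t - s)) (at t)"
        by simp
      then have "((\<lambda>t. \<Gamma> (max 0 (t - s))) has_real_derivative v (t - s)) (at t)"
        by (rule has_field_derivative_transform_within_open[where S = "{s<..}"])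
          (use 2 in auto)
      then show ?thesis
        using 2 unfolding g_def by simp
    qed
  qed
  then show ?thesis
    unfolding s_def g_def .
qed

lemma path_along_flow:
  fixes \<Gamma> w F F' :: "real \<Rightarrow> real"
  assumes \<Gamma>: "\<And>t. (\<Gamma> has_real_derivative w (\<Gamma> t)) (at t)" and w: "continuous_on UNIV w"
    and F: "\<And>z. (F has_real_derivative F' z) (at z)" and F': "continuous_on UNIV F'"
    and cost: "\<And>z. Lag U (w z) z \<le> w z * F' z" and rest: "deriv U (\<Gamma> 0) = 0"
    and "0 \<le> \<tau>" "\<tau> \<le> T"
  shows "\<exists>\<gamma> g. ac_path T \<gamma> g \<and> \<gamma> 0 = \<Gamma> 0 \<and> \<gamma> T = \<Gamma> \<tau> \<and>
    action U T \<gamma> g \<le> ennreal (F (\<Gamma> \<tau>) - F (\<Gamma> 0))"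
proof -
  define s where "s = T - \<tau>"
  define \<gamma> where "\<gamma> = (\<lambda>t. \<Gamma> (max 0 (t - s)))"
  define g where "g = (\<lambda>t. if t \<le> s then 0 else w (\<Gamma> (t - s)))"
  have "continuous_on UNIV \<Gamma>"
    using \<Gamma> by (meson DERIV_isCont continuous_at_imp_continuous_on)
  then have "continuous_on UNIV (\<lambda>t. w (\<Gamma> t))"
    by (rule continuous_on_compose2[OF w]) auto
  then have \<gamma>: "ac_path T \<gamma> g"
    unfolding \<gamma>_def g_def s_def by (rule ac_path_wait_then_move[OF \<Gamma> _ \<open>0 \<le> \<tau>\<close> \<open>\<tau> \<le> T\<close>])
  have "\<gamma> 0 = \<Gamma> 0" "\<gamma> T = \<Gamma> \<tau>"
    using \<open>0 \<le> \<tau>\<close> \<open>\<tau> \<le> T\<close> unfolding \<gamma>_def s_def by simp_all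
  moreover have "action U T \<gamma> g \<le> ennreal (F (\<gamma> T) - F (\<gamma> 0))"
  proof (rule action_le_of_pointwise[OF _ \<gamma> F F'])
    show "0 \<le> T"
      using \<open>0 \<le> \<tau>\<close> \<open>\<tau> \<le> T\<close> by simp
    fix t
    show "Lag U (g t) (\<gamma> t) \<le> g t * F' (\<gamma> t)"
    proof (cases "t \<le> s")
      case True
      then show ?thesis
        using rest unfolding \<gamma>_def g_def Lag_def by simp
    next
      case False
      then show ?thesis
        using cost[of "\<Gamma> (t - s)"] unfolding \<gamma>_def g_def by simp
    qed
  qed
  ultimately show ?thesis
    using \<gamma> by auto
qed

section \<open>Barriers from a critical point\<close>

lemma enn2real_eq_of_bounds:
  fixes I :: ennreal
  assumes "0 \<le> a" and lower: "ennreal a \<le> I" and upper: "\<And>e. e > 0 \<Longrightarrow> I \<le> ennreal (a + e)"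
  shows "enn2real I = a"
proof -
  have "I < \<infinity>"
    using upper[of 1] by (simp add: le_less_trans)
  then obtain r where r: "I = ennreal r" "0 \<le> r"
    using ennreal_cases[of I] by auto
  have "a \<le> r"
    using lower r \<open>0 \<le> a\<close> by (simp add: ennreal_le_iff)
  moreover have "r \<le> a"
  proof (rule field_le_epsilon)
    fix e :: real assume "0 < e"
    from upper[OF this] have "ennreal r \<le> ennreal (a + e)"
      by (simp only: r(1))
    then show "r \<le> a + e"
      using \<open>0 \<le> a\<close> \<open>0 < e\<close> by (subst (asm) ennreal_le_iff) auto
  qed
  ultimately show ?thesis
    using r by simp
qed

locale climbing =
  fixes U P Q :: "real \<Rightarrow> real" and M :: real
  assumes deriv_U_continuous: "continuous_on UNIV (deriv U)"
    and deriv_U_bounded: "\<And>z. \<bar>deriv U z\<bar> \<le> M"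
    and P_deriv: "\<And>z. (P has_real_derivative max 0 (deriv U z)) (at z)"
    and Q_deriv: "\<And>z. (Q has_real_derivative max 0 (- deriv U z)) (at z)"
begin

(* The total rise of U met when moving from x to y: the max picks P y - P x for x <= y and
   Q x - Q y for y <= x, since P and Q are monotone. *)
definition climb :: "real \<Rightarrow> real \<Rightarrow> real" where
  "climb x y = max (P y - P x) (Q x - Q y)"

lemma P_mono: "a \<le> b \<Longrightarrow> P a \<le> P b"
  by (rule DERIV_nonneg_imp_nondecreasing) (use P_deriv in \<open>auto intro!: exI\<close>)

lemma Q_mono: "a \<le> b \<Longrightarrow> Q a \<le> Q b"
  by (rule DERIV_nonneg_imp_nondecreasing) (use Q_deriv in \<open>auto intro!: exI\<close>)

lemma climb_right: "x \<le> y \<Longrightarrow> climb x y = P y - P x"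
  unfolding climb_def using P_mono[of x y] Q_mono[of x y] by simp

lemma climb_left: "y \<le> x \<Longrightarrow> climb x y = Q x - Q y"
  unfolding climb_def using P_mono[of y x] Q_mono[of y x] by simp

lemma climb_nonneg: "0 \<le> climb x y"
  unfolding climb_def using P_mono[of x y] Q_mono[of y x] by (cases "x \<le> y") auto

lemma climb_self [simp]: "climb x x = 0"
  unfolding climb_def by simp

lemma climb_triangle: "climb x z \<le> climb x y + climb y z"
proof -
  have "P z - P x = (P y - P x) + (P z - P y)" "Q x - Q z = (Q x - Q y) + (Q y - Q z)"
    by simp_all
  then show ?thesis
    unfolding climb_def by linarith
qed

lemma climb_add_right: "x \<le> y \<Longrightarrow> y \<le> z \<Longrightarrow> climb x z = climb x y + climb y z"
  using climb_right[of x y] climb_right[of y z] climb_right[of x z] by simp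

lemma climb_add_left: "z \<le> y \<Longrightarrow> y \<le> x \<Longrightarrow> climb x z = climb x y + climb y z"
  using climb_left[of z y] climb_left[of y x] climb_left[of z x] by simp

lemma climb_target_lipschitz: "\<bar>climb a y - climb a x\<bar> \<le> \<bar>(P y + Q y) - (P x + Q x)\<bar>"
proof (cases "x \<le> y")
  case True
  then show ?thesis
    using P_mono[OF True] Q_mono[OF True] unfolding climb_def by (auto simp: max_def)
next
  case False
  then show ?thesis
    using P_mono[of y x] Q_mono[of y x] unfolding climb_def by (auto simp: max_def)
qed

lemma action_ge_climb:
  assumes "0 \<le> T" "ac_path T \<gamma> g"
  shows "ennreal (climb (\<gamma> 0) (\<gamma> T)) \<le> action U T \<gamma> g"
proof -
  have "ennreal (P (\<gamma> T) - P (\<gamma> 0)) \<le> action U T \<gamma> g"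
  proof (rule action_ge_of_pointwise[OF assms P_deriv])
    show "continuous_on UNIV (\<lambda>z. max 0 (deriv U z))"
      by (intro continuous_intros deriv_U_continuous)
    show "g t * max 0 (deriv U (\<gamma> t)) \<le> Lag U (g t) (\<gamma> t)" for t
      unfolding Lag_def by (rule pos_part_mult_le_Lag(1))
  qed
  moreover have "ennreal (- Q (\<gamma> T) - - Q (\<gamma> 0)) \<le> action U T \<gamma> g"
  proof (rule action_ge_of_pointwise[OF assms])
    show "((\<lambda>z. - Q z) has_real_derivative - max 0 (- deriv U z)) (at z)" for z
      using Q_deriv by (auto intro!: derivative_eq_intros)
    show "continuous_on UNIV (\<lambda>z. - max 0 (- deriv U z))"
      by (intro continuous_intros deriv_U_continuous)
    show "g t * - max 0 (- deriv U (\<gamma> t)) \<le> Lag U (g t) (\<gamma> t)" for t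
      using pos_part_mult_le_Lag(2) unfolding Lag_def by simp
  qed
  ultimately show ?thesis
    unfolding climb_def by (simp add: max_def)
qed

lemma flow_at_speed:
  assumes "\<delta> > 0"
  obtains \<Gamma> where "\<Gamma> 0 = x" "\<And>t. (\<Gamma> has_real_derivative \<bar>deriv U (\<Gamma> t)\<bar> + \<delta>) (at t)"
    "surj \<Gamma>" "strict_mono \<Gamma>"
proof -
  have continuous: "continuous_on UNIV (\<lambda>z. \<bar>deriv U z\<bar> + \<delta>)"
    by (intro continuous_intros deriv_U_continuous)
  have lower: "\<delta> \<le> \<bar>deriv U z\<bar> + \<delta>" and upper: "\<bar>deriv U z\<bar> + \<delta> \<le> M + \<delta>" for z
    using deriv_U_bounded[of z] by auto
  show thesis
    using flow_of_positive_field[OF continuous assms lower upper, where x = x] that by blast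
qed

lemma eventually_path_rightward:
  assumes rest: "deriv U x = 0" and "x \<le> y" and "\<delta> > 0"
  shows "\<forall>\<^sub>F T in at_top. \<exists>\<gamma> g. ac_path T \<gamma> g \<and> \<gamma> 0 = x \<and> \<gamma> T = y \<and>
    action U T \<gamma> g \<le> ennreal (climb x y + \<delta> * \<bar>y - x\<bar>)"
proof -
  obtain \<Gamma> where "\<Gamma> 0 = x" and \<Gamma>: "\<And>t. (\<Gamma> has_real_derivative \<bar>deriv U (\<Gamma> t)\<bar> + \<delta>) (at t)"
    and "surj \<Gamma>" "strict_mono \<Gamma>"
    by (rule flow_at_speed[OF \<open>\<delta> > 0\<close>, where x = x]) blast
  obtain \<tau> where "\<Gamma> \<tau> = y"
    using \<open>surj \<Gamma>\<close> by (metis surjD)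
  then have "0 \<le> \<tau>"
    using \<open>x \<le> y\<close> \<open>\<Gamma> 0 = x\<close> \<open>strict_mono \<Gamma>\<close> by (metis strict_mono_less_eq)
  show ?thesis
    using eventually_ge_at_top[of \<tau>]
  proof (rule eventually_mono)
    fix T assume "\<tau> \<le> T"
    have "\<exists>\<gamma> g. ac_path T \<gamma> g \<and> \<gamma> 0 = \<Gamma> 0 \<and> \<gamma> T = \<Gamma> \<tau> \<and>
        action U T \<gamma> g \<le> ennreal ((P (\<Gamma> \<tau>) + \<delta> * \<Gamma> \<tau>) - (P (\<Gamma> 0) + \<delta> * \<Gamma> 0))"
    proof (rule path_along_flow[where w = "\<lambda>z. \<bar>deriv U z\<bar> + \<delta>", OF \<Gamma> _ _ _ _ _ \<open>0 \<le> \<tau>\<close> \<open>\<tau> \<le> T\<close>])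
      show "continuous_on UNIV (\<lambda>z. \<bar>deriv U z\<bar> + \<delta>)" "continuous_on UNIV (\<lambda>z. max 0 (deriv U z) + \<delta>)"
        by (intro continuous_intros deriv_U_continuous)+
      show "((\<lambda>z. P z + \<delta> * z) has_real_derivative max 0 (deriv U z) + \<delta>) (at z)" for z
        using P_deriv by (auto intro!: derivative_eq_intros)
      show "Lag U (\<bar>deriv U z\<bar> + \<delta>) z \<le> (\<bar>deriv U z\<bar> + \<delta>) * (max 0 (deriv U z) + \<delta>)" for z
        unfolding Lag_def using Lag_at_flow_speed_le[OF \<open>\<delta> > 0\<close>] by simp
      show "deriv U (\<Gamma> 0) = 0"
        using rest \<open>\<Gamma> 0 = x\<close> by simp
    qed
    then show "\<exists>\<gamma> g. ac_path T \<gamma> g \<and> \<gamma> 0 = x \<and> \<gamma> T = y \<and>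
        action U T \<gamma> g \<le> ennreal (climb x y + \<delta> * \<bar>y - x\<bar>)"
      using \<open>x \<le> y\<close> \<open>\<Gamma> 0 = x\<close> \<open>\<Gamma> \<tau> = y\<close> by (simp add: climb_right algebra_simps)
  qed
qed

lemma eventually_path_leftward:
  assumes rest: "deriv U x = 0" and "y \<le> x" and "\<delta> > 0"
  shows "\<forall>\<^sub>F T in at_top. \<exists>\<gamma> g. ac_path T \<gamma> g \<and> \<gamma> 0 = x \<and> \<gamma> T = y \<and>
    action U T \<gamma> g \<le> ennreal (climb x y + \<delta> * \<bar>y - x\<bar>)"
proof -
  obtain \<Gamma> where "\<Gamma> 0 = x" and \<Gamma>: "\<And>t. (\<Gamma> has_real_derivative \<bar>deriv U (\<Gamma> t)\<bar> + \<delta>) (at t)"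
    and "surj \<Gamma>" "strict_mono \<Gamma>"
    by (rule flow_at_speed[OF \<open>\<delta> > 0\<close>, where x = x]) blast
  obtain t where "\<Gamma> t = y"
    using \<open>surj \<Gamma>\<close> by (metis surjD)
  then have "t \<le> 0"
    using \<open>y \<le> x\<close> \<open>\<Gamma> 0 = x\<close> strict_mono_less_eq[OF \<open>strict_mono \<Gamma>\<close>, of t 0] by simp
  define \<tau> where "\<tau> = - t"
  have "\<Gamma> (- \<tau>) = y" "0 \<le> \<tau>"
    using \<open>\<Gamma> t = y\<close> \<open>t \<le> 0\<close> unfolding \<tau>_def by simp_all
  have "((\<lambda>t. \<Gamma> (- t)) has_real_derivative (\<bar>deriv U (\<Gamma> (- t))\<bar> + \<delta>) * (- 1)) (at t)" for t
    by (rule DERIV_chain2[OF \<Gamma>]) (auto intro!: derivative_eq_intros)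
  then have \<Gamma>': "((\<lambda>t. \<Gamma> (- t)) has_real_derivative - (\<bar>deriv U (\<Gamma> (- t))\<bar> + \<delta>)) (at t)" for t
    by simp
  show ?thesis
    using eventually_ge_at_top[of \<tau>]
  proof (rule eventually_mono)
    fix T assume "\<tau> \<le> T"
    have "\<exists>\<gamma> g. ac_path T \<gamma> g \<and> \<gamma> 0 = \<Gamma> (- 0) \<and> \<gamma> T = \<Gamma> (- \<tau>) \<and>
        action U T \<gamma> g \<le> ennreal ((- Q (\<Gamma> (- \<tau>)) - \<delta> * \<Gamma> (- \<tau>)) - (- Q (\<Gamma> (- 0)) - \<delta> * \<Gamma> (- 0)))"
    proof (rule path_along_flow[where w = "\<lambda>z. - (\<bar>deriv U z\<bar> + \<delta>)", OF \<Gamma>' _ _ _ _ _ \<open>0 \<le> \<tau>\<close> \<open>\<tau> \<le> T\<close>])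
      show "continuous_on UNIV (\<lambda>z. - (\<bar>deriv U z\<bar> + \<delta>))" "continuous_on UNIV (\<lambda>z. - (max 0 (- deriv U z) + \<delta>))"
        by (intro continuous_intros deriv_U_continuous)+
      show "((\<lambda>z. - Q z - \<delta> * z) has_real_derivative - (max 0 (- deriv U z) + \<delta>)) (at z)" for z
        using Q_deriv by (auto intro!: derivative_eq_intros)
      show "Lag U (- (\<bar>deriv U z\<bar> + \<delta>)) z \<le> - (\<bar>deriv U z\<bar> + \<delta>) * - (max 0 (- deriv U z) + \<delta>)" for z
      proof -
        have "(- (\<bar>deriv U z\<bar> + \<delta>) + deriv U z)\<^sup>2 = ((\<bar>- deriv U z\<bar> + \<delta>) + - deriv U z)\<^sup>2"
          by (simp add: power2_eq_square algebra_simps)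
        then show ?thesis
          using Lag_at_flow_speed_le[OF \<open>\<delta> > 0\<close>, of "- deriv U z"]
          unfolding Lag_def minus_mult_minus by simp
      qed
      show "deriv U (\<Gamma> (- 0)) = 0"
        using rest \<open>\<Gamma> 0 = x\<close> by simp
    qed
    then show "\<exists>\<gamma> g. ac_path T \<gamma> g \<and> \<gamma> 0 = x \<and> \<gamma> T = y \<and>
        action U T \<gamma> g \<le> ennreal (climb x y + \<delta> * \<bar>y - x\<bar>)"
      using \<open>y \<le> x\<close> \<open>\<Gamma> 0 = x\<close> \<open>\<Gamma> (- \<tau>) = y\<close> by (simp add: climb_left algebra_simps)
  qed
qed

lemma eventually_cheap_path:
  assumes rest: "deriv U x = 0" and "e > 0"
  shows "\<forall>\<^sub>F T in at_top. \<exists>\<gamma> g. ac_path T \<gamma> g \<and> \<gamma> 0 = x \<and> \<gamma> T = y \<and>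
    action U T \<gamma> g \<le> ennreal (climb x y + e)"
proof -
  define \<delta> where "\<delta> = e / (\<bar>y - x\<bar> + 1)"
  have "\<delta> > 0"
    using \<open>e > 0\<close> unfolding \<delta>_def by simp
  have "\<delta> * \<bar>y - x\<bar> \<le> e"
    unfolding \<delta>_def using \<open>e > 0\<close> by (rule divide_abs_add_one_mult_le)
  then have "ennreal (climb x y + \<delta> * \<bar>y - x\<bar>) \<le> ennreal (climb x y + e)"
    by (intro ennreal_leI) simp
  moreover have "\<forall>\<^sub>F T in at_top. \<exists>\<gamma> g. ac_path T \<gamma> g \<and> \<gamma> 0 = x \<and> \<gamma> T = y \<and>
      action U T \<gamma> g \<le> ennreal (climb x y + \<delta> * \<bar>y - x\<bar>)"
    using eventually_path_rightward[OF rest _ \<open>\<delta> > 0\<close>] eventually_path_leftward[OF rest _ \<open>\<delta> > 0\<close>]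
    by (cases "x \<le> y") auto
  ultimately show ?thesis
  proof (elim eventually_mono)
    fix T assume "\<exists>\<gamma> g. ac_path T \<gamma> g \<and> \<gamma> 0 = x \<and> \<gamma> T = y \<and>
      action U T \<gamma> g \<le> ennreal (climb x y + \<delta> * \<bar>y - x\<bar>)"
    then obtain \<gamma> g where "ac_path T \<gamma> g" "\<gamma> 0 = x" "\<gamma> T = y"
      and action: "action U T \<gamma> g \<le> ennreal (climb x y + \<delta> * \<bar>y - x\<bar>)"
      by blast
    moreover note order_trans[OF action \<open>ennreal (climb x y + \<delta> * \<bar>y - x\<bar>) \<le> ennreal (climb x y + e)\<close>]
    ultimately show "\<exists>\<gamma> g. ac_path T \<gamma> g \<and> \<gamma> 0 = x \<and> \<gamma> T = y \<and> action U T \<gamma> g \<le> ennreal (climb x y + e)"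
      by blast
  qed
qed

lemma barrier_eq_climb:
  assumes rest: "deriv U x = 0"
  shows "barrier U y x = climb x y"
proof -
  define S where "S = {(T, \<gamma>, g). T \<ge> 0 \<and> ac_path T \<gamma> g \<and> \<gamma> 0 = x \<and> \<gamma> T = y}"
  define I where "I = (INF p \<in> S. action U (fst p) (fst (snd p)) (snd (snd p)))"
  have "ennreal (climb x y) \<le> I"
    unfolding I_def
  proof (rule INF_greatest)
    fix p assume "p \<in> S"
    then obtain T \<gamma> g where "p = (T, \<gamma>, g)" "0 \<le> T" "ac_path T \<gamma> g" "\<gamma> 0 = x" "\<gamma> T = y"
      unfolding S_def by auto
    then show "ennreal (climb x y) \<le> action U (fst p) (fst (snd p)) (snd (snd p))"
      using action_ge_climb[of T \<gamma> g] by simp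
  qed
  moreover have "I \<le> ennreal (climb x y + e)" if "e > 0" for e
  proof -
    have "\<forall>\<^sub>F T in at_top. 0 \<le> T \<and> (\<exists>\<gamma> g. ac_path T \<gamma> g \<and> \<gamma> 0 = x \<and> \<gamma> T = y \<and>
        action U T \<gamma> g \<le> ennreal (climb x y + e))"
      by (intro eventually_conj eventually_ge_at_top eventually_cheap_path[OF rest that])
    then obtain T0 where T0: "\<And>T. T0 \<le> T \<Longrightarrow> 0 \<le> T \<and> (\<exists>\<gamma> g. ac_path T \<gamma> g \<and> \<gamma> 0 = x \<and>
        \<gamma> T = y \<and> action U T \<gamma> g \<le> ennreal (climb x y + e))"
      unfolding eventually_at_top_linorder by blast
    then have "0 \<le> T0"
      using order_refl by blast
    obtain \<gamma> g where \<gamma>: "ac_path T0 \<gamma> g" "\<gamma> 0 = x" "\<gamma> T0 = y"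
      and action: "action U T0 \<gamma> g \<le> ennreal (climb x y + e)"
      using T0[OF order_refl] by blast
    have "I \<le> action U T0 \<gamma> g"
      unfolding I_def S_def using \<open>0 \<le> T0\<close> \<gamma> by (intro INF_lower2[of "(T0, \<gamma>, g)"]) auto
    also have "\<dots> \<le> ennreal (climb x y + e)"
      by (rule action)
    finally show ?thesis .
  qed
  ultimately have "enn2real I = climb x y"
    by (intro enn2real_eq_of_bounds climb_nonneg)
  then show ?thesis
    unfolding barrier_def I_def S_def .
qed

lemma INF_action_to_lifts_ge:
  assumes "0 \<le> T"
  shows "ennreal (Inf (range (\<lambda>m::int. climb x (y + of_int m))))
    \<le> (INF p \<in> {(\<gamma>, g). ac_path T \<gamma> g \<and> \<gamma> 0 = x \<and> (\<exists>m::int. \<gamma> T = y + of_int m)}.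
        action U T (fst p) (snd p))"
proof (rule INF_greatest)
  fix p assume "p \<in> {(\<gamma>, g). ac_path T \<gamma> g \<and> \<gamma> 0 = x \<and> (\<exists>m::int. \<gamma> T = y + of_int m)}"
  then obtain \<gamma> g m where p: "p = (\<gamma>, g)" "ac_path T \<gamma> g" "\<gamma> 0 = x" "\<gamma> T = y + of_int m"
    by auto
  have "bdd_below (range (\<lambda>m::int. climb x (y + of_int m)))"
    using climb_nonneg by (intro bdd_belowI[of _ 0]) auto
  then have "Inf (range (\<lambda>m::int. climb x (y + of_int m))) \<le> climb (\<gamma> 0) (\<gamma> T)"
    unfolding p(3,4) by (rule cInf_lower[OF rangeI])
  then have "ennreal (Inf (range (\<lambda>m::int. climb x (y + of_int m)))) \<le> ennreal (climb (\<gamma> 0) (\<gamma> T))"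
    by (rule ennreal_leI)
  also have "\<dots> \<le> action U T \<gamma> g"
    by (rule action_ge_climb[OF assms p(2)])
  finally show "ennreal (Inf (range (\<lambda>m::int. climb x (y + of_int m)))) \<le> action U T (fst p) (snd p)"
    using p(1) by simp
qed

lemma peierls_eq_Inf_climb:
  assumes rest: "deriv U x = 0"
  shows "peierls U y x = Inf (range (\<lambda>m::int. climb x (y + of_int m)))"
proof -
  define h where "h = Inf (range (\<lambda>m::int. climb x (y + of_int m)))"
  have bdd: "bdd_below (range (\<lambda>m::int. climb x (y + of_int m)))"
    using climb_nonneg by (intro bdd_belowI[of _ 0]) auto
  define S where "S T = {(\<gamma>, g). ac_path T \<gamma> g \<and> \<gamma> 0 = x \<and> (\<exists>m::int. \<gamma> T = y + of_int m)}" for T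
  define I where "I T = (INF p \<in> S T. action U T (fst p) (snd p))" for T
  have "ennreal h \<le> Liminf at_top I"
  proof (rule Liminf_bounded[OF eventually_mono[OF eventually_ge_at_top[of 0]]])
    show "ennreal h \<le> I T" if "0 \<le> T" for T
      unfolding h_def I_def S_def using that by (rule INF_action_to_lifts_ge)
  qed
  moreover have "Liminf at_top I \<le> ennreal (h + e)" if "e > 0" for e
  proof -
    have "h < h + e / 2"
      using that by simp
    then obtain m where m: "climb x (y + of_int m) < h + e / 2"
      unfolding h_def by (subst (asm) cInf_less_iff[OF _ bdd]) auto
    define z where "z = y + of_int m"
    have "\<forall>\<^sub>F T in at_top. \<exists>\<gamma> g. ac_path T \<gamma> g \<and> \<gamma> 0 = x \<and> \<gamma> T = z \<and>
        action U T \<gamma> g \<le> ennreal (climb x z + e / 2)"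
      using that by (intro eventually_cheap_path[OF rest]) simp
    then have "\<forall>\<^sub>F T in at_top. I T \<le> ennreal (h + e)"
    proof (rule eventually_mono)
      fix T assume "\<exists>\<gamma> g. ac_path T \<gamma> g \<and> \<gamma> 0 = x \<and> \<gamma> T = z \<and>
        action U T \<gamma> g \<le> ennreal (climb x z + e / 2)"
      then obtain \<gamma> g where \<gamma>: "ac_path T \<gamma> g" "\<gamma> 0 = x" "\<gamma> T = z"
        and action: "action U T \<gamma> g \<le> ennreal (climb x z + e / 2)"
        by blast
      have "I T \<le> action U T \<gamma> g"
        unfolding I_def S_def using \<gamma> by (intro INF_lower2[of "(\<gamma>, g)"]) (auto simp: z_def)
      also have "\<dots> \<le> ennreal (h + e)"
        using m[folded z_def] by (intro order_trans[OF action] ennreal_leI) simp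
      finally show "I T \<le> ennreal (h + e)" .
    qed
    then have "Limsup at_top I \<le> ennreal (h + e)"
      by (rule Limsup_bounded)
    then show ?thesis
      using Liminf_le_Limsup[of at_top I] by simp
  qed
  moreover have "0 \<le> h"
    unfolding h_def by (rule cInf_greatest) (auto intro: climb_nonneg)
  ultimately have "enn2real (Liminf at_top I) = h"
    by (intro enn2real_eq_of_bounds)
  then show ?thesis
    unfolding peierls_def I_def S_def h_def .
qed

end

section \<open>The function W\<close>

(* xm i and xM i are the paper's x_i and x_(i+1/2). *)
locale landscape = climbing +
  fixes k :: int and xm xM :: "int \<Rightarrow> real"
  assumes U_deriv: "\<And>x. (U has_real_derivative deriv U x) (at x)"
    and deriv_U_periodic: "\<And>x. deriv U (x + 1) = deriv U x"
    and k_pos: "1 \<le> k"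
    and xm_add_k: "\<And>i. xm (i + k) = xm i + 1"
    and xM_add_k: "\<And>i. xM (i + k) = xM i + 1"
    and xM_0: "xM 0 = 0" and xM_k: "xM k = 1"
    and interlaced: "\<And>i. i \<in> {1..k} \<Longrightarrow> xM (i - 1) < xm i \<and> xm i < xM i"
    and minima: "\<And>i. i \<in> {1..k} \<Longrightarrow> loc_min U (xm i)"
    and critical_points: "{x \<in> {0..<1}. deriv U x = 0} = xm ` {1..k} \<union> xM ` {0..<k}"
begin

abbreviation W :: "real \<Rightarrow> real" where
  "W \<equiv> Wfun U xm k"

lemma xm_shift: "xm (i + m * k) = xm i + of_int m"
  using shift_of_int_mult[where F = xm and d = k and c = 1] xm_add_k by simp

lemma xM_shift: "xM (i + m * k) = xM i + of_int m"
  using shift_of_int_mult[where F = xM and d = k and c = 1] xM_add_k by simp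

lemma deriv_U_shift: "deriv U (z + of_int m) = deriv U z"
  using shift_of_int_mult[where F = "deriv U" and d = 1 and c = 0] deriv_U_periodic by simp

lemma index_decompose:
  obtains i m where "i \<in> {1..k}" "l = i + m * k"
proof
  have "0 < k"
    using k_pos by simp
  then have "0 \<le> (l - 1) mod k" "(l - 1) mod k < k"
    by simp_all
  then show "(l - 1) mod k + 1 \<in> {1..k}"
    by simp
  show "l = ((l - 1) mod k + 1) + (l - 1) div k * k"
    by (simp add: algebra_simps)
qed

lemma interlaced_all: "xM (l - 1) < xm l" "xm l < xM l"
proof -
  obtain i m where i: "i \<in> {1..k}" and l: "l = i + m * k"
    by (rule index_decompose)
  have "xM (l - 1) = xM (i - 1) + of_int m"
    using xM_shift[of "i - 1" m] unfolding l by (simp add: algebra_simps)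
  then show "xM (l - 1) < xm l" "xm l < xM l"
    using interlaced[OF i] unfolding l xm_shift xM_shift by simp_all
qed

lemma strict_mono_xm: "strict_mono xm"
proof (rule strict_mono_int_of_step)
  show "xm l < xm (l + 1)" for l
    using interlaced_all(2)[of l] interlaced_all(1)[of "l + 1"] by simp
qed

lemma strict_mono_xM: "strict_mono xM"
proof (rule strict_mono_int_of_step)
  show "xM l < xM (l + 1)" for l
    using interlaced_all(1)[of "l + 1"] interlaced_all(2)[of "l + 1"] by simp
qed

lemma xm_less_xM_iff: "xm p < xM q \<longleftrightarrow> p \<le> q"
proof
  assume "xm p < xM q"
  show "p \<le> q"
  proof (rule ccontr)
    assume "\<not> p \<le> q"
    then have "xm (q + 1) \<le> xm p"
      using strict_mono_xm by (simp add: strict_mono_less_eq)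
    then show False
      using \<open>xm p < xM q\<close> interlaced_all(1)[of "q + 1"] by simp
  qed
next
  assume "p \<le> q"
  then have "xm p \<le> xm q"
    using strict_mono_xm by (simp add: strict_mono_less_eq)
  then show "xm p < xM q"
    using interlaced_all(2)[of q] by linarith
qed

lemma xM_less_xm_iff: "xM p < xm q \<longleftrightarrow> p < q"
proof
  assume "p < q"
  then have "xm (p + 1) \<le> xm q"
    using strict_mono_xm by (simp add: strict_mono_less_eq)
  then show "xM p < xm q"
    using interlaced_all(1)[of "p + 1"] by simp
next
  assume "xM p < xm q"
  then show "p < q"
    using xm_less_xM_iff[of q p] by auto
qed

lemma deriv_U_xm: "deriv U (xm l) = 0"
proof -
  obtain i m where i: "i \<in> {1..k}" and l: "l = i + m * k"
    by (rule index_decompose)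
  have "xm i \<in> {x \<in> {0..<1}. deriv U x = 0}"
    using i unfolding critical_points by blast
  then show ?thesis
    unfolding l xm_shift deriv_U_shift by simp
qed

lemma deriv_U_xM: "deriv U (xM l) = 0"
proof -
  obtain i m where i: "i \<in> {1..k}" and l: "l + 1 = i + m * k"
    by (rule index_decompose)
  have "xM (i - 1) \<in> xm ` {1..k} \<union> xM ` {0..<k}"
    using i by (intro UnI2 imageI) simp
  then have "deriv U (xM (i - 1)) = 0"
    unfolding critical_points[symmetric] by simp
  moreover have "l = (i - 1) + m * k"
    using l by simp
  ultimately show ?thesis
    using xM_shift[of "i - 1" m] deriv_U_shift by simp
qed

lemma deriv_U_nonzero_between:
  assumes i: "i \<in> {1..k}" and z: "z \<in> {xM (i - 1)<..<xm i} \<union> {xm i<..<xM i}"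
  shows "deriv U z \<noteq> 0"
proof
  assume "deriv U z = 0"
  have "xM 0 \<le> xM (i - 1)" "xM i \<le> xM k"
    using i strict_mono_xM by (simp_all add: strict_mono_less_eq)
  then have "z \<in> {x \<in> {0..<1}. deriv U x = 0}"
    using z \<open>deriv U z = 0\<close> interlaced_all[of i] xM_0 xM_k by auto
  then obtain j where "z = xm j \<or> z = xM j"
    unfolding critical_points by blast
  then show False
    using z strict_mono_less[OF strict_mono_xm] strict_mono_less[OF strict_mono_xM]
      xm_less_xM_iff xM_less_xm_iff by auto
qed

lemma deriv_U_pos:
  assumes "z \<in> {xm l<..<xM l}"
  shows "deriv U z > 0"
proof -
  obtain i m where i: "i \<in> {1..k}" and l: "l = i + m * k"
    by (rule index_decompose)
  have nonzero: "deriv U y \<noteq> 0" if "y \<in> {xm i<..<xM i}" for y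
    using deriv_U_nonzero_between[OF i] that by blast
  obtain e where "e > 0" and e: "\<And>y. \<bar>y - xm i\<bar> < e \<Longrightarrow> U (xm i) \<le> U y"
    using minima[OF i] unfolding loc_min_def by blast
  define w where "w = min ((xm i + xM i) / 2) (xm i + e / 2)"
  have "w \<le> (xm i + xM i) / 2" "w \<le> xm i + e / 2"
    unfolding w_def by (rule min.cobounded1, rule min.cobounded2)
  moreover have "xm i < w"
    using interlaced_all(2)[of i] \<open>e > 0\<close> unfolding w_def by simp
  ultimately have w: "xm i < w" "w < xM i" "\<bar>w - xm i\<bar> < e"
    using interlaced_all(2)[of i] \<open>e > 0\<close> by auto
  obtain \<xi> where \<xi>: "xm i < \<xi>" "\<xi> < w" "U w - U (xm i) = (w - xm i) * deriv U \<xi>"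
    using MVT2[OF w(1), of U "deriv U"] U_deriv by blast
  have "0 \<le> (w - xm i) * deriv U \<xi>"
    using e[OF w(3)] \<xi>(3) by simp
  then have "0 \<le> deriv U \<xi>"
    using w(1) by (simp add: zero_le_mult_iff)
  moreover have \<xi>_in: "\<xi> \<in> {xm i<..<xM i}"
    using \<xi> w by auto
  ultimately have "deriv U \<xi> > 0"
    using nonzero[OF \<xi>_in] by simp
  moreover have "z - of_int m \<in> {xm i<..<xM i}"
    using assms unfolding l xm_shift xM_shift by auto
  ultimately show ?thesis
    using continuous_nonzero_sign_constant[OF continuous_on_subset[OF deriv_U_continuous] nonzero \<xi>_in]
      deriv_U_shift[of "z - of_int m" m] by simp
qed
lemma deriv_U_neg:
  assumes "z \<in> {xM (l - 1)<..<xm l}"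
  shows "deriv U z < 0"
proof -
  obtain i m where i: "i \<in> {1..k}" and l: "l = i + m * k"
    by (rule index_decompose)
  have nonzero: "- deriv U y \<noteq> 0" if "y \<in> {xM (i - 1)<..<xm i}" for y
    using deriv_U_nonzero_between[OF i] that by simp
  obtain e where "e > 0" and e: "\<And>y. \<bar>y - xm i\<bar> < e \<Longrightarrow> U (xm i) \<le> U y"
    using minima[OF i] unfolding loc_min_def by blast
  define w where "w = max ((xM (i - 1) + xm i) / 2) (xm i - e / 2)"
  have "(xM (i - 1) + xm i) / 2 \<le> w" "xm i - e / 2 \<le> w"
    unfolding w_def by (rule max.cobounded1, rule max.cobounded2)
  moreover have "w < xm i"
    using interlaced_all(1)[of i] \<open>e > 0\<close> unfolding w_def by simp
  ultimately have w: "w < xm i" "xM (i - 1) < w" "\<bar>w - xm i\<bar> < e"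
    using interlaced_all(1)[of i] \<open>e > 0\<close> by auto
  obtain \<xi> where \<xi>: "w < \<xi>" "\<xi> < xm i" "U (xm i) - U w = (xm i - w) * deriv U \<xi>"
    using MVT2[OF w(1), of U "deriv U"] U_deriv by blast
  have "(xm i - w) * deriv U \<xi> \<le> 0"
    using e[OF w(3)] \<xi>(3) by simp
  then have "deriv U \<xi> \<le> 0"
    using w(1) by (simp add: mult_le_0_iff)
  moreover have \<xi>_in: "\<xi> \<in> {xM (i - 1)<..<xm i}"
    using \<xi> w by auto
  ultimately have "- deriv U \<xi> > 0"
    using nonzero[OF \<xi>_in] by simp
  moreover have "z - of_int m \<in> {xM (i - 1)<..<xm i}"
    using assms xM_shift[of "i - 1" m] unfolding l xm_shift by (auto simp: algebra_simps)
  moreover have "continuous_on {xM (i - 1)..xm i} (\<lambda>y. - deriv U y)"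
    by (intro continuous_intros continuous_on_subset[OF deriv_U_continuous]) simp
  ultimately show ?thesis
    using continuous_nonzero_sign_constant[OF _ nonzero \<xi>_in] deriv_U_shift[of "z - of_int m" m] by simp
qed

lemma deriv_U_nonneg: "z \<in> {xm l..xM l} \<Longrightarrow> 0 \<le> deriv U z"
  using deriv_U_pos[of z l] deriv_U_xm[of l] deriv_U_xM[of l] by (cases "z = xm l \<or> z = xM l") auto

lemma deriv_U_nonpos: "z \<in> {xM (l - 1)..xm l} \<Longrightarrow> deriv U z \<le> 0"
  using deriv_U_neg[of z l] deriv_U_xm[of l] deriv_U_xM[of "l - 1"]
  by (cases "z = xm l \<or> z = xM (l - 1)") auto

lemma U_continuous: "continuous_on UNIV U"
  using U_deriv by (meson DERIV_isCont continuous_at_imp_continuous_on)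

lemma U_differentiable: "U differentiable (at x)"
  using U_deriv real_differentiable_def by blast

lemma U_strict_mono_on: "strict_mono_on {xm l..xM l} U"
proof (rule strict_mono_onI)
  fix r s assume r: "r \<in> {xm l..xM l}" and s: "s \<in> {xm l..xM l}" and "r < s"
  show "U r < U s"
  proof (rule DERIV_pos_imp_increasing_open[OF \<open>r < s\<close>])
    fix x assume "r < x" "x < s"
    then have "deriv U x > 0"
      using r s by (intro deriv_U_pos[where l = l]) auto
    then show "\<exists>y. DERIV U x :> y \<and> y > 0"
      using U_deriv by blast
  qed (rule continuous_on_subset[OF U_continuous], simp)
qed

lemma U_strict_antimono_on: "strict_antimono_on {xM (l - 1)..xm l} U"
proof (rule monotone_onI)
  fix r s assume r: "r \<in> {xM (l - 1)..xm l}" and s: "s \<in> {xM (l - 1)..xm l}" and "r < s"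
  show "U s < U r"
  proof (rule DERIV_neg_imp_decreasing_open[OF \<open>r < s\<close>])
    fix x assume "r < x" "x < s"
    then have "deriv U x < 0"
      using r s by (intro deriv_U_neg[where l = l]) auto
    then show "\<exists>y. DERIV U x :> y \<and> y < 0"
      using U_deriv by blast
  qed (rule continuous_on_subset[OF U_continuous], simp)
qed

lemma climb_from_well:
  assumes "z \<in> {xM (l - 1)..xM l}"
  shows "climb (xm l) z = U z - U (xm l)"
proof (cases "xm l \<le> z")
  case True
  have deriv: "((\<lambda>y. P y - U y) has_real_derivative 0) (at y)" if "y \<in> {xm l..xM l}" for y
    using DERIV_diff[OF P_deriv U_deriv, of y] deriv_U_nonneg[OF that] by simp
  have "P z - U z = P (xm l) - U (xm l)"
    by (rule DERIV_zero_Icc_eq[where a = "xm l" and b = "xM l"])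
      (use deriv True assms interlaced_all(2)[of l] in auto)
  then show ?thesis
    using True by (simp add: climb_right)
next
  case False
  have deriv: "((\<lambda>y. Q y + U y) has_real_derivative 0) (at y)" if "y \<in> {xM (l - 1)..xm l}" for y
    using DERIV_add[OF Q_deriv U_deriv, of y] deriv_U_nonpos[OF that] by simp
  have "Q z + U z = Q (xm l) + U (xm l)"
    by (rule DERIV_zero_Icc_eq[where a = "xM (l - 1)" and b = "xm l"])
      (use deriv False assms interlaced_all(1)[of l] in auto)
  then show ?thesis
    using False by (simp add: climb_left)
qed

lemma climb_from_peak:
  assumes "z \<in> {xm l..xm (l + 1)}"
  shows "climb (xM l) z = 0"
proof (cases "xM l \<le> z")
  case True
  have deriv: "(P has_real_derivative 0) (at y)" if "y \<in> {xM l..xm (l + 1)}" for y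
    using P_deriv[of y] deriv_U_nonpos[of y "l + 1"] that by simp
  have "P z = P (xM l)"
    by (rule DERIV_zero_Icc_eq[where a = "xM l" and b = "xm (l + 1)"])
      (use deriv True assms interlaced_all(1)[of "l + 1"] in auto)
  then show ?thesis
    using True by (simp add: climb_right)
next
  case False
  have deriv: "(Q has_real_derivative 0) (at y)" if "y \<in> {xm l..xM l}" for y
    using Q_deriv[of y] deriv_U_nonneg[OF that] by simp
  have "Q z = Q (xM l)"
    by (rule DERIV_zero_Icc_eq[where a = "xm l" and b = "xM l"])
      (use deriv False assms interlaced_all(2)[of l] in auto)
  then show ?thesis
    using False by (simp add: climb_left)
qed

lemma antiderivative_add_one:
  assumes F: "\<And>z. (F has_real_derivative h (deriv U z)) (at z)"
  shows "F (z + 1) = F z + (F 1 - F 0)"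
proof -
  have "((\<lambda>z. F (z + 1) - F z) has_real_derivative 0) (at x)" for x
  proof -
    have "((\<lambda>z. F (z + 1)) has_real_derivative h (deriv U (x + 1)) * 1) (at x)"
      by (rule DERIV_chain2[OF F]) (auto intro!: derivative_eq_intros)
    from DERIV_diff[OF this F[of x]] show ?thesis
      using deriv_U_periodic[of x] by simp
  qed
  from DERIV_isconst_all[OF allI[OF this], of z 0] show ?thesis
    by simp
qed

lemma climb_shift: "climb (x + of_int m) (y + of_int m) = climb x y"
proof -
  have "P (z + of_int m * 1) = P z + of_int m * (P 1 - P 0)" for z
    by (rule shift_of_int_mult) (rule antiderivative_add_one[OF P_deriv])
  moreover have "Q (z + of_int m * 1) = Q z + of_int m * (Q 1 - Q 0)" for z
    by (rule shift_of_int_mult) (rule antiderivative_add_one[where h = "\<lambda>u. max 0 (- u)", OF Q_deriv])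
  ultimately show ?thesis
    unfolding climb_def by simp
qed

lemma climb_xm_shift: "climb (xm (a + m * k)) (xm (c + m * k)) = climb (xm a) (xm c)"
  unfolding xm_shift by (rule climb_shift)

lemma xm_mono: "p \<le> q \<Longrightarrow> xm p \<le> xm q"
  using strict_mono_xm by (simp add: strict_mono_less_eq)

(* For n in {1..k}, cut_cost n g is hR_tilde + hL_tilde at (n, j) with j = g (mod k): the loop around
   the circle from x_n is cut open between the wells x_g and x_(g+1). well_level n is the paper's W_n,
   extended to all lifts of the wells. *)
definition cut_cost :: "int \<Rightarrow> int \<Rightarrow> real" where
  "cut_cost n g = climb (xm g) (xm n) + climb (xm (g + 1)) (xm (n + k))"

definition well_level :: "int \<Rightarrow> real" where
  "well_level n = Min (cut_cost n ` {n..<n + k})"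

lemma well_level_le: "n \<le> g \<Longrightarrow> g < n + k \<Longrightarrow> well_level n \<le> cut_cost n g"
  unfolding well_level_def by (intro Min_le) auto

lemma well_level_attained:
  obtains g where "n \<le> g" "g < n + k" "well_level n = cut_cost n g"
proof -
  have "well_level n \<in> cut_cost n ` {n..<n + k}"
    unfolding well_level_def using k_pos by (intro Min_in) auto
  then show thesis
    using that by auto
qed

lemma well_level_nonneg: "0 \<le> well_level n"
proof -
  obtain g where "well_level n = cut_cost n g"
    by (rule well_level_attained)
  then show ?thesis
    unfolding cut_cost_def using climb_nonneg by (simp add: add_nonneg_nonneg)
qed

lemma well_level_shift: "well_level (n + m * k) = well_level n"
proof -
  have "cut_cost (n' + k) (g + k) = cut_cost n' g" for n' g
    using climb_xm_shift[of g 1 n'] climb_xm_shift[of "g + 1" 1 "n' + k"]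
    unfolding cut_cost_def by (simp add: algebra_simps)
  then have images: "cut_cost (n' + k) ` {n' + k..<n' + k + k} = cut_cost n' ` {n'..<n' + k}" for n'
    using image_image[of "cut_cost (n' + k)" "\<lambda>g. g + k" "{n'..<n' + k}"] by simp
  have "well_level (n' + k) = well_level n' + 0" for n'
    unfolding well_level_def images by simp
  then show ?thesis
    using shift_of_int_mult[where F = well_level and d = k and c = 0] by simp
qed

lemma well_level_le_up:
  assumes "n \<le> i" "i < n + k"
  shows "well_level i \<le> well_level n + climb (xm n) (xm i)"
proof -
  obtain g where g: "n \<le> g" "g < n + k" "well_level n = cut_cost n g"
    by (rule well_level_attained)
  have shift: "climb (xm (n + k)) (xm (i + k)) = climb (xm n) (xm i)"
    using climb_xm_shift[of n 1 i] by simp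
  show ?thesis
  proof (cases "i \<le> g")
    case True
    have "well_level i \<le> cut_cost i g"
      using True g assms by (intro well_level_le) auto
    moreover have "climb (xm g) (xm n) = climb (xm g) (xm i) + climb (xm i) (xm n)"
      using True assms by (intro climb_add_left xm_mono)
    moreover have "climb (xm (g + 1)) (xm (i + k))
        \<le> climb (xm (g + 1)) (xm (n + k)) + climb (xm (n + k)) (xm (i + k))"
      by (rule climb_triangle)
    ultimately show ?thesis
      using g(3) shift climb_nonneg[of "xm i" "xm n"] unfolding cut_cost_def by linarith
  next
    case False
    have "well_level i \<le> cut_cost i i"
      using k_pos by (intro well_level_le) auto
    also have "\<dots> = climb (xm (i + 1)) (xm (n + k)) + climb (xm (n + k)) (xm (i + k))"
      unfolding cut_cost_def using assms by (simp add: climb_add_right xm_mono)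
    also have "\<dots> \<le> cut_cost n g + climb (xm n) (xm i)"
    proof -
      have "climb (xm (g + 1)) (xm (n + k))
          = climb (xm (g + 1)) (xm (i + 1)) + climb (xm (i + 1)) (xm (n + k))"
        using False assms by (intro climb_add_right xm_mono) auto
      then show ?thesis
        using shift climb_nonneg[of "xm g" "xm n"] climb_nonneg[of "xm (g + 1)" "xm (i + 1)"]
        unfolding cut_cost_def by linarith
    qed
    finally show ?thesis
      using g(3) by simp
  qed
qed

lemma well_level_le_down:
  assumes "i \<le> n" "n < i + k"
  shows "well_level i \<le> well_level n + climb (xm n) (xm i)"
proof -
  obtain g where g: "n \<le> g" "g < n + k" "well_level n = cut_cost n g"
    by (rule well_level_attained)
  show ?thesis
  proof (cases "g < i + k")
    case True
    have "well_level i \<le> cut_cost i g"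
      using True g assms by (intro well_level_le) auto
    moreover have "climb (xm g) (xm i) \<le> climb (xm g) (xm n) + climb (xm n) (xm i)"
      by (rule climb_triangle)
    moreover have "climb (xm (g + 1)) (xm (n + k))
        = climb (xm (g + 1)) (xm (i + k)) + climb (xm (i + k)) (xm (n + k))"
      using True assms by (intro climb_add_right xm_mono) auto
    ultimately show ?thesis
      using g(3) climb_nonneg[of "xm (i + k)" "xm (n + k)"] unfolding cut_cost_def by linarith
  next
    case False
    have "well_level i \<le> cut_cost i (i + k - 1)"
      using k_pos by (intro well_level_le) auto
    also have "\<dots> = climb (xm (i + k - 1)) (xm n) + climb (xm n) (xm i)"
    proof -
      have "climb (xm (i + k - 1)) (xm i) = climb (xm (i + k - 1)) (xm n) + climb (xm n) (xm i)"
        using assms by (intro climb_add_left xm_mono) auto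
      then show ?thesis
        unfolding cut_cost_def by simp
    qed
    also have "\<dots> \<le> cut_cost n g + climb (xm n) (xm i)"
    proof -
      have "climb (xm g) (xm n) = climb (xm g) (xm (i + k - 1)) + climb (xm (i + k - 1)) (xm n)"
        using False assms by (intro climb_add_left xm_mono) auto
      then show ?thesis
        using climb_nonneg[of "xm g" "xm (i + k - 1)"] climb_nonneg[of "xm (g + 1)" "xm (n + k)"]
        unfolding cut_cost_def by linarith
    qed
    finally show ?thesis
      using g(3) by simp
  qed
qed

lemma well_level_le_climb: "well_level i \<le> well_level n + climb (xm n) (xm i)"
proof -
  \<comment> \<open>Replace i by the i' = i (mod k) closest to n on the side of i; climb only grows beyond i'.\<close>
  have "0 < k"
    using k_pos by simp
  show ?thesis
  proof (cases "n \<le> i")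
    case True
    define i' where "i' = n + (i - n) mod k"
    have "0 \<le> (i - n) mod k" "(i - n) mod k < k" "(i - n) mod k \<le> i - n"
      using \<open>0 < k\<close> True by (simp_all add: zmod_le_nonneg_dividend)
    then have i': "n \<le> i'" "i' < n + k" "i' \<le> i"
      unfolding i'_def by simp_all
    have "i = i' + (i - n) div k * k"
      using div_mult_mod_eq[of "i - n" k] unfolding i'_def by linarith
    then have "well_level i = well_level i'"
      using well_level_shift by metis
    moreover have "climb (xm n) (xm i) = climb (xm n) (xm i') + climb (xm i') (xm i)"
      using i' by (intro climb_add_right xm_mono)
    ultimately show ?thesis
      using well_level_le_up[OF i'(1,2)] climb_nonneg[of "xm i'" "xm i"] by linarith
  next
    case False
    define i' where "i' = n - (n - i) mod k"
    have "0 \<le> (n - i) mod k" "(n - i) mod k < k" "(n - i) mod k \<le> n - i"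
      using \<open>0 < k\<close> False by (simp_all add: zmod_le_nonneg_dividend)
    then have i': "i' \<le> n" "n < i' + k" "i \<le> i'"
      unfolding i'_def by simp_all
    have "i = i' + (- ((n - i) div k)) * k"
      using div_mult_mod_eq[of "n - i" k] unfolding i'_def by linarith
    then have "well_level i = well_level i'"
      using well_level_shift by metis
    moreover have "climb (xm n) (xm i) = climb (xm n) (xm i') + climb (xm i') (xm i)"
      using i' by (intro climb_add_left xm_mono)
    ultimately show ?thesis
      using well_level_le_down[OF i'(1,2)] climb_nonneg[of "xm i'" "xm i"] by linarith
  qed
qed

lemma Wcoef_eq_well_level:
  assumes i: "i \<in> {1..k}"
  shows "Wcoef U xm k i = well_level i"
proof -
  have barrier: "barrier U y (xm a) = climb (xm a) y" for y a
    by (rule barrier_eq_climb[OF deriv_U_xm])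
  have "hR_tilde U xm k i j + hL_tilde U xm k i j = cut_cost i (if j < i then j + k else j)" for j
  proof (cases "j < i")
    case True
    have "climb (xm (j + k)) (xm i) = climb (xm j) (xm (i - k))"
      using climb_xm_shift[of j 1 "i - k"] by simp
    moreover have "climb (xm (j + k + 1)) (xm (i + k)) = climb (xm (j + 1)) (xm i)"
      using climb_xm_shift[of "j + 1" 1 i] by (simp add: algebra_simps)
    ultimately show ?thesis
      using True unfolding hR_tilde_def hL_tilde_def cut_cost_def barrier by simp
  next
    case False
    then show ?thesis
      unfolding hR_tilde_def hL_tilde_def cut_cost_def barrier by simp
  qed
  then show ?thesis
    unfolding Wcoef_def well_level_def wrap_around_image[OF i, symmetric] image_image by simp
qed

lemma Wcoef_add_peierls:
  assumes "j \<in> {1..k}"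
  shows "Wcoef U xm k j + peierls U x (xm j) =
    Inf (range (\<lambda>m. well_level (j - m * k) + climb (xm (j - m * k)) x))"
proof -
  have "climb (xm j) (x + of_int m) = climb (xm (j - m * k)) x" for m
    using climb_shift[of "xm (j - m * k)" m x] xm_shift[of "j - m * k" m] by simp
  moreover have "well_level j = well_level (j - m * k)" for m
    using well_level_shift[of "j - m * k" m] by simp
  moreover have "bdd_below (range (\<lambda>m::int. climb (xm j) (x + of_int m)))"
    using climb_nonneg by (intro bdd_belowI[of _ 0]) auto
  ultimately show ?thesis
    unfolding Wcoef_eq_well_level[OF assms] peierls_eq_Inf_climb[OF deriv_U_xm]
    by (simp add: Inf_add_eq[symmetric])
qed

lemma W_eq_Inf: "W x = Inf (range (\<lambda>n. well_level n + climb (xm n) x))"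
proof -
  define F where "F n = well_level n + climb (xm n) x" for n
  have bdd: "bdd_below (range F)"
    unfolding F_def using well_level_nonneg climb_nonneg by (intro bdd_belowI[of _ 0]) (auto intro: add_nonneg_nonneg)
  define G where "G j = Inf (range (\<lambda>m. F (j - m * k)))" for j
  have "Wcoef U xm k j + peierls U x (xm j) = G j" if "j \<in> {1..k}" for j
    unfolding G_def F_def using that by (rule Wcoef_add_peierls)
  then have W: "W x = Min (G ` {1..k})"
    unfolding Wfun_def by (metis (no_types, lifting) image_cong)
  have finite: "finite (G ` {1..k})" "G ` {1..k} \<noteq> {}"
    using k_pos by auto
  have "Min (G ` {1..k}) \<le> Inf (range F)"
  proof (rule cInf_greatest)
    fix v assume "v \<in> range F"
    then obtain n where v: "v = F n"
      by blast
    obtain i m where i: "i \<in> {1..k}" and n: "n = i + m * k"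
      by (rule index_decompose)
    have "Min (G ` {1..k}) \<le> G i"
      using finite i by (intro Min_le) auto
    also have "G i \<le> F (i - (- m) * k)"
      unfolding G_def by (rule cInf_lower[OF rangeI bdd_below_mono[OF bdd]]) auto
    finally show "Min (G ` {1..k}) \<le> v"
      using v n by simp
  qed simp
  moreover have "Inf (range F) \<le> G j" for j
    unfolding G_def using bdd by (intro cInf_superset_mono) auto
  then have "Inf (range F) \<le> Min (G ` {1..k})"
    using Min_in[OF finite] by auto
  ultimately show ?thesis
    unfolding W F_def by simp
qed

lemma W_at_well: "W (xm j) = well_level j"
proof -
  have "bdd_below (range (\<lambda>n. well_level n + climb (xm n) (xm j)))"
    using well_level_nonneg climb_nonneg by (intro bdd_belowI[of _ 0]) (auto intro: add_nonneg_nonneg)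
  then have "Inf (range (\<lambda>n. well_level n + climb (xm n) (xm j))) \<le> well_level j + climb (xm j) (xm j)"
    by (rule cInf_lower[OF rangeI])
  then have "Inf (range (\<lambda>n. well_level n + climb (xm n) (xm j))) \<le> well_level j"
    by simp
  moreover have "well_level j \<le> Inf (range (\<lambda>n. well_level n + climb (xm n) (xm j)))"
    by (rule cInf_greatest) (auto intro: well_level_le_climb)
  ultimately show ?thesis
    unfolding W_eq_Inf by simp
qed

lemma W_periodic: "W (x + 1) = W x"
proof -
  have "well_level (n + k) + climb (xm (n + k)) (x + 1) = well_level n + climb (xm n) x" for n
    using well_level_shift[of n 1] climb_shift[of "xm n" 1 x] xm_add_k[of n] by simp
  then have "range (\<lambda>n. well_level n + climb (xm n) (x + 1)) = range (\<lambda>n. well_level n + climb (xm n) x)"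
    using surj_plus_right[of k] image_image[of "\<lambda>n. well_level n + climb (xm n) (x + 1)" "\<lambda>n. n + k" UNIV]
    by simp
  then show ?thesis
    unfolding W_eq_Inf by simp
qed

lemma W_dominated: "\<bar>W y - W x\<bar> \<le> \<bar>(P y + Q y) - (P x + Q x)\<bar>"
proof -
  have "bdd_below (range (\<lambda>n. well_level n + climb (xm n) z))" for z
    using well_level_nonneg climb_nonneg by (intro bdd_belowI[of _ 0]) (auto intro: add_nonneg_nonneg)
  then show ?thesis
    unfolding W_eq_Inf using climb_target_lipschitz by (intro Inf_range_abs_diff_le) simp_all
qed

lemma W_lipschitz: "M-lipschitz_on UNIV W"
proof (rule lipschitz_onI)
  have "max 0 (deriv U z) + max 0 (- deriv U z) = \<bar>deriv U z\<bar>" for z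
    by (auto simp: max_def)
  then have V: "((\<lambda>z. P z + Q z) has_real_derivative \<bar>deriv U z\<bar>) (at z within UNIV)" for z
    using DERIV_add[OF P_deriv Q_deriv, of z] by metis
  fix x y :: real
  have "\<bar>W x - W y\<bar> \<le> \<bar>(P x + Q x) - (P y + Q y)\<bar>"
    by (rule W_dominated)
  also have "\<dots> \<le> M * \<bar>x - y\<bar>"
    using field_differentiable_bound[OF convex_UNIV V, of M x y] deriv_U_bounded by simp
  finally show "dist (W x) (W y) \<le> M * dist x y"
    by (simp add: dist_real_def)
  show "0 \<le> M"
    using deriv_U_bounded[of 0] by simp
qed

lemma W_has_deriv_critical:
  assumes "deriv U c = 0"
  shows "(W has_real_derivative 0) (at c)"
proof (rule DERIV_zero_if_dominated[OF _ W_dominated])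
  show "((\<lambda>z. P z + Q z) has_real_derivative 0) (at c)"
    using DERIV_add[OF P_deriv Q_deriv, of c] assms by simp
qed

lemma W_differentiable_xm: "W differentiable (at (xm l))"
  using W_has_deriv_critical[OF deriv_U_xm] real_differentiable_def by blast

lemma W_differentiable_xM: "W differentiable (at (xM l))"
  using W_has_deriv_critical[OF deriv_U_xM] real_differentiable_def by blast

lemma W_on_ascent:
  obtains \<alpha> \<beta> where "\<And>z. z \<in> {xm l..xM l} \<Longrightarrow> W z = min (U z + \<alpha>) \<beta>"
proof -
  \<comment> \<open>Wells left of z are reached through xm l, wells right of z through the peak xM l at no cost.\<close>
  define F where "F x n = well_level n + climb (xm n) x" for x n
  have bdd: "bdd_below (F x ` S)" for x S
    unfolding F_def using well_level_nonneg climb_nonneg by (intro bdd_belowI[of _ 0]) (auto intro: add_nonneg_nonneg)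
  have "W z = min (U z + (Inf (F (xm l) ` {..l}) - U (xm l))) (Inf (F (xM l) ` {l<..}))"
    if z: "z \<in> {xm l..xM l}" for z
  proof -
    have "F z n = (U z - U (xm l)) + F (xm l) n" if "n \<le> l" for n
    proof -
      have "climb (xm n) z = climb (xm n) (xm l) + climb (xm l) z"
        using that z by (intro climb_add_right xm_mono) auto
      moreover have "climb (xm l) z = U z - U (xm l)"
        using z interlaced_all(1)[of l] by (intro climb_from_well) auto
      ultimately show ?thesis
        unfolding F_def by simp
    qed
    then have "F z ` {..l} = (\<lambda>n. (U z - U (xm l)) + F (xm l) n) ` {..l}"
      by (intro image_cong) auto
    then have below: "Inf (F z ` {..l}) = (U z - U (xm l)) + Inf (F (xm l) ` {..l})"
      using Inf_add_eq[OF bdd, of "{..l}" "U z - U (xm l)"] by simp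
    have "F z n = F (xM l) n" if "l < n" for n
    proof -
      have "climb (xm n) z = climb (xm n) (xM l) + climb (xM l) z"
        using that z xM_less_xm_iff[of l n] by (intro climb_add_left) auto
      moreover have "climb (xM l) z = 0"
        using z interlaced_all(1)[of "l + 1"] by (intro climb_from_peak) auto
      ultimately show ?thesis
        unfolding F_def by simp
    qed
    then have above: "Inf (F z ` {l<..}) = Inf (F (xM l) ` {l<..})"
      by (metis (no_types, lifting) greaterThan_iff image_cong)
    have "W z = min (Inf (F z ` {..l})) (Inf (F z ` {l<..}))"
      unfolding W_eq_Inf F_def[symmetric] using bdd[of z UNIV] by (rule Inf_range_split)
    then show ?thesis
      unfolding below above by simp
  qed
  then show thesis
    by (rule that)
qed

lemma W_on_descent:
  obtains \<alpha> \<beta> where "\<And>z. z \<in> {xM (l - 1)..xm l} \<Longrightarrow> W z = min \<beta> (U z + \<alpha>)"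
proof -
  define F where "F x n = well_level n + climb (xm n) x" for x n
  have bdd: "bdd_below (F x ` S)" for x S
    unfolding F_def using well_level_nonneg climb_nonneg by (intro bdd_belowI[of _ 0]) (auto intro: add_nonneg_nonneg)
  have "W z = min (Inf (F (xM (l - 1)) ` {..l - 1})) (U z + (Inf (F (xm l) ` {l - 1<..}) - U (xm l)))"
    if z: "z \<in> {xM (l - 1)..xm l}" for z
  proof -
    have "F z n = F (xM (l - 1)) n" if "n \<le> l - 1" for n
    proof -
      have "climb (xm n) z = climb (xm n) (xM (l - 1)) + climb (xM (l - 1)) z"
        using that z xm_less_xM_iff[of n "l - 1"] by (intro climb_add_right) auto
      moreover have "climb (xM (l - 1)) z = 0"
        using z interlaced_all(2)[of "l - 1"] by (intro climb_from_peak) auto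
      ultimately show ?thesis
        unfolding F_def by simp
    qed
    then have below: "Inf (F z ` {..l - 1}) = Inf (F (xM (l - 1)) ` {..l - 1})"
      by (metis (no_types, lifting) atMost_iff image_cong)
    have "F z n = (U z - U (xm l)) + F (xm l) n" if "l - 1 < n" for n
    proof -
      have "climb (xm n) z = climb (xm n) (xm l) + climb (xm l) z"
        using that z by (intro climb_add_left xm_mono) auto
      moreover have "climb (xm l) z = U z - U (xm l)"
        using z interlaced_all(2)[of l] by (intro climb_from_well) auto
      ultimately show ?thesis
        unfolding F_def by simp
    qed
    then have "F z ` {l - 1<..} = (\<lambda>n. (U z - U (xm l)) + F (xm l) n) ` {l - 1<..}"
      by (intro image_cong) auto
    then have above: "Inf (F z ` {l - 1<..}) = (U z - U (xm l)) + Inf (F (xm l) ` {l - 1<..})"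
      using Inf_add_eq[OF bdd, of "{l - 1<..}" "U z - U (xm l)"] by simp
    have "W z = min (Inf (F z ` {..l - 1})) (Inf (F z ` {l - 1<..}))"
      unfolding W_eq_Inf F_def[symmetric] using bdd[of z UNIV] by (rule Inf_range_split)
    then show ?thesis
      unfolding below above by simp
  qed
  then show thesis
    by (rule that)
qed

lemma W_nondiff_on_ascent:
  assumes W: "\<And>y. y \<in> {xm l..xM l} \<Longrightarrow> W y = min (U y + \<alpha>) \<beta>"
    and z: "z \<in> {xm l..xM l}" and nondiff: "\<not> W differentiable (at z)"
  shows "z \<in> {xm l<..<xM l}" "U z + \<alpha> = \<beta>"
proof -
  show z': "z \<in> {xm l<..<xM l}"
    using z nondiff W_differentiable_xm[of l] W_differentiable_xM[of l] by (auto simp: less_le)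
  show "U z + \<alpha> = \<beta>"
  proof (rule ccontr)
    assume "U z + \<alpha> \<noteq> \<beta>"
    then have "W differentiable (at z)"
    proof (rule differentiable_min_unless_tie[where S = "{xm l<..<xM l}", rotated -1])
      show "continuous_on UNIV (\<lambda>y. U y + \<alpha>)" "continuous_on UNIV (\<lambda>y. \<beta>)"
        by (intro continuous_intros U_continuous)+
      show "(\<lambda>y. U y + \<alpha>) differentiable (at z)" "(\<lambda>y. \<beta>) differentiable (at z)"
        by (intro differentiable_add U_differentiable differentiable_const)+
    qed (use z' W in auto)
    with nondiff show False by simp
  qed
qed

lemma W_nondiff_on_descent:
  assumes W: "\<And>y. y \<in> {xM (l - 1)..xm l} \<Longrightarrow> W y = min \<beta> (U y + \<alpha>)"
    and z: "z \<in> {xM (l - 1)..xm l}" and nondiff: "\<not> W differentiable (at z)"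
  shows "z \<in> {xM (l - 1)<..<xm l}" "U z + \<alpha> = \<beta>"
proof -
  show z': "z \<in> {xM (l - 1)<..<xm l}"
    using z nondiff W_differentiable_xm[of l] W_differentiable_xM[of "l - 1"] by (auto simp: less_le)
  show "U z + \<alpha> = \<beta>"
  proof (rule ccontr)
    assume "U z + \<alpha> \<noteq> \<beta>"
    then have "W differentiable (at z)"
    proof (rule differentiable_min_unless_tie[where S = "{xM (l - 1)<..<xm l}", rotated -1])
      show "continuous_on UNIV (\<lambda>y. U y + \<alpha>)" "continuous_on UNIV (\<lambda>y. \<beta>)"
        by (intro continuous_intros U_continuous)+
      show "(\<lambda>y. U y + \<alpha>) differentiable (at z)" "(\<lambda>y. \<beta>) differentiable (at z)"
        by (intro differentiable_add U_differentiable differentiable_const)+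
    qed (use z' W in auto)
    with nondiff show False by simp
  qed
qed

lemma W_nondiff_unique_on_ascent:
  assumes "z \<in> {xm l..xM l}" "z' \<in> {xm l..xM l}"
    and "\<not> W differentiable (at z)" "\<not> W differentiable (at z')"
  shows "z = z'"
proof -
  obtain \<alpha> \<beta> where W: "\<And>y. y \<in> {xm l..xM l} \<Longrightarrow> W y = min (U y + \<alpha>) \<beta>"
    by (rule W_on_ascent[where l = l]) blast
  have "U z = U z'"
    using W_nondiff_on_ascent(2)[OF W assms(1,3)] W_nondiff_on_ascent(2)[OF W assms(2,4)] by simp
  then show ?thesis
    using monotone_onD[OF U_strict_mono_on assms(1,2)] monotone_onD[OF U_strict_mono_on assms(2,1)]
    by (cases z z' rule: linorder_cases) auto
qed

lemma W_nondiff_unique_on_descent: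
  assumes "z \<in> {xM (l - 1)..xm l}" "z' \<in> {xM (l - 1)..xm l}"
    and "\<not> W differentiable (at z)" "\<not> W differentiable (at z')"
  shows "z = z'"
proof -
  obtain \<alpha> \<beta> where W: "\<And>y. y \<in> {xM (l - 1)..xm l} \<Longrightarrow> W y = min \<beta> (U y + \<alpha>)"
    by (rule W_on_descent[where l = l]) blast
  have "U z = U z'"
    using W_nondiff_on_descent(2)[OF W assms(1,3)] W_nondiff_on_descent(2)[OF W assms(2,4)] by simp
  then show ?thesis
    using monotone_onD[OF U_strict_antimono_on assms(1,2)] monotone_onD[OF U_strict_antimono_on assms(2,1)]
    by (cases z z' rule: linorder_cases) auto
qed

lemma W_nondiff_shape_on_ascent:
  assumes z: "z \<in> {xm l..xM l}" and nondiff: "\<not> W differentiable (at z)"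
  shows "\<exists>\<delta>>0. strict_mono_on {z - \<delta>..z} W \<and> (\<forall>y\<in>{z..z + \<delta>}. W y = W z)"
proof -
  obtain \<alpha> \<beta> where W: "\<And>y. y \<in> {xm l..xM l} \<Longrightarrow> W y = min (U y + \<alpha>) \<beta>"
    by (rule W_on_ascent[where l = l]) blast
  note z' = W_nondiff_on_ascent[OF W z nondiff]
  define \<delta> where "\<delta> = min (z - xm l) (xM l - z)"
  have "\<delta> > 0"
    using z'(1) unfolding \<delta>_def by simp
  have inside: "y \<in> {xm l..xM l}" if "y \<in> {z - \<delta>..z + \<delta>}" for y
    using that unfolding \<delta>_def by auto
  have U_less: "U r < U s" if "r \<in> {z - \<delta>..z + \<delta>}" "s \<in> {z - \<delta>..z + \<delta>}" "r < s" for r s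
    using U_strict_mono_on[of l] inside[OF that(1)] inside[OF that(2)] that(3) by (simp add: monotone_on_def)
  have rising: "W y = U y + \<alpha>" if "y \<in> {z - \<delta>..z}" for y
    using U_less[of y z] that \<open>\<delta> > 0\<close> z'(2) W[OF inside] by (cases "y = z") auto
  have "strict_mono_on {z - \<delta>..z} W"
    using U_less rising by (intro strict_mono_onI) auto
  moreover have "W y = W z" if "y \<in> {z..z + \<delta>}" for y
    using U_less[of z y] that \<open>\<delta> > 0\<close> z'(2) W[OF inside] W[OF z] by (cases "y = z") auto
  ultimately show ?thesis
    using \<open>\<delta> > 0\<close> by blast
qed

lemma W_nondiff_shape_on_descent:
  assumes z: "z \<in> {xM (l - 1)..xm l}" and nondiff: "\<not> W differentiable (at z)"
  shows "\<exists>\<delta>>0. (\<forall>y\<in>{z - \<delta>..z}. W y = W z) \<and> strict_antimono_on {z..z + \<delta>} W"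
proof -
  obtain \<alpha> \<beta> where W: "\<And>y. y \<in> {xM (l - 1)..xm l} \<Longrightarrow> W y = min \<beta> (U y + \<alpha>)"
    by (rule W_on_descent[where l = l]) blast
  note z' = W_nondiff_on_descent[OF W z nondiff]
  define \<delta> where "\<delta> = min (z - xM (l - 1)) (xm l - z)"
  have "\<delta> > 0"
    using z'(1) unfolding \<delta>_def by simp
  have inside: "y \<in> {xM (l - 1)..xm l}" if "y \<in> {z - \<delta>..z + \<delta>}" for y
    using that unfolding \<delta>_def by auto
  have U_less: "U s < U r" if "r \<in> {z - \<delta>..z + \<delta>}" "s \<in> {z - \<delta>..z + \<delta>}" "r < s" for r s
    using U_strict_antimono_on[of l] inside[OF that(1)] inside[OF that(2)] that(3) by (simp add: monotone_on_def)
  have "W y = W z" if "y \<in> {z - \<delta>..z}" for y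
    using U_less[of y z] that \<open>\<delta> > 0\<close> z'(2) W[OF inside] W[OF z] by (cases "y = z") auto
  moreover have falling: "W y = U y + \<alpha>" if "y \<in> {z..z + \<delta>}" for y
    using U_less[of z y] that \<open>\<delta> > 0\<close> z'(2) W[OF inside] by (cases "y = z") auto
  have "strict_antimono_on {z..z + \<delta>} W"
    using U_less falling by (intro monotone_onI) auto
  ultimately show ?thesis
    using \<open>\<delta> > 0\<close> by blast
qed

lemma peak_interval_cover:
  obtains l where "xM (l - 1) \<le> x" "x < xM l"
proof -
  have "xM (\<lfloor>x\<rfloor> * k) \<le> x" "x < xM ((\<lfloor>x\<rfloor> + 1) * k)"
    using xM_shift[of 0 "\<lfloor>x\<rfloor>"] xM_shift[of 0 "\<lfloor>x\<rfloor> + 1"] xM_0 floor_correct[of x] by simp_all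
  moreover have "\<lfloor>x\<rfloor> * k \<le> (\<lfloor>x\<rfloor> + 1) * k"
    using k_pos by (simp add: algebra_simps)
  ultimately show thesis
    using int_crossing[of "\<lfloor>x\<rfloor> * k" "(\<lfloor>x\<rfloor> + 1) * k" xM x] that by blast
qed

lemma W_viscosity_at:
  assumes "C1_fun \<phi>"
  shows "loc_max (\<lambda>y. W y - \<phi> y) x \<Longrightarrow> deriv \<phi> x * (deriv \<phi> x - deriv U x) \<le> 0"
    and "loc_min (\<lambda>y. W y - \<phi> y) x \<Longrightarrow> 0 \<le> deriv \<phi> x * (deriv \<phi> x - deriv U x)"
proof -
  define p where "p = deriv \<phi> x"
  have \<phi>: "(\<phi> has_real_derivative p) (at x)"
    using assms unfolding C1_fun_def p_def by (simp add: DERIV_deriv_iff_real_differentiable)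
  have U': "((\<lambda>y. U y + c) has_real_derivative deriv U x) (at x)" for c
    using U_deriv[of x] by (auto intro!: derivative_eq_intros)
  obtain l where l: "xM (l - 1) \<le> x" "x < xM l"
    by (rule peak_interval_cover)
  have "deriv U x = 0 \<or> x \<in> {xM (l - 1)<..<xm l} \<or> x \<in> {xm l<..<xM l}"
    using l deriv_U_xm[of l] deriv_U_xM[of "l - 1"] by (cases "x = xM (l - 1)"; cases "x = xm l") auto
  then consider "deriv U x = 0" | "x \<in> {xM (l - 1)<..<xm l}" | "x \<in> {xm l<..<xM l}"
    by blast
  then have "(loc_max (\<lambda>y. W y - \<phi> y) x \<longrightarrow> p * (p - deriv U x) \<le> 0) \<and>
      (loc_min (\<lambda>y. W y - \<phi> y) x \<longrightarrow> 0 \<le> p * (p - deriv U x))"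
  proof cases
    case 1
    then have "loc_max (\<lambda>y. W y - \<phi> y) x \<or> loc_min (\<lambda>y. W y - \<phi> y) x \<Longrightarrow> p = 0"
      using deriv_eq_at_loc_extremum[OF W_has_deriv_critical \<phi>] by blast
    then show ?thesis
      by auto
  next
    case 2
    obtain \<alpha> \<beta> where W: "\<And>y. y \<in> {xM (l - 1)..xm l} \<Longrightarrow> W y = min \<beta> (U y + \<alpha>)"
      by (rule W_on_descent[where l = l]) blast
    have "W y = min \<beta> (U y + \<alpha>)" if "y \<in> {xM (l - 1)<..<xm l}" for y
      using W that by simp
    from hamiltonian_sign_at_min[OF _ 2 this DERIV_const U' \<phi>, where f = "deriv U x"]
    show ?thesis
      by simp
  next
    case 3
    obtain \<alpha> \<beta> where W: "\<And>y. y \<in> {xm l..xM l} \<Longrightarrow> W y = min (U y + \<alpha>) \<beta>"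
      by (rule W_on_ascent[where l = l]) blast
    have "W y = min (U y + \<alpha>) \<beta>" if "y \<in> {xm l<..<xM l}" for y
      using W that by simp
    from hamiltonian_sign_at_min[OF _ 3 this U' DERIV_const \<phi>, where f = "deriv U x"]
    show ?thesis
      by simp
  qed
  then show "loc_max (\<lambda>y. W y - \<phi> y) x \<Longrightarrow> deriv \<phi> x * (deriv \<phi> x - deriv U x) \<le> 0"
    and "loc_min (\<lambda>y. W y - \<phi> y) x \<Longrightarrow> 0 \<le> deriv \<phi> x * (deriv \<phi> x - deriv U x)"
    unfolding p_def by blast+
qed

lemma W_viscosity: "viscosity_solution (\<lambda>p x. p * (p - deriv U x)) W"
  unfolding viscosity_solution_def
  using lipschitz_on_continuous_on[OF W_lipschitz] W_viscosity_at by blast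

end

theorem proposition3p6:
  fixes U Ut :: "real \<Rightarrow> real" and b :: real and k :: int
    and xm xM :: "int \<Rightarrow> real"
  assumes smoothU: "smooth_fun U" and smoothUt: "smooth_fun Ut"
    and skew: "\<forall>x. U x = Ut x - b * x" and per: "\<forall>x. Ut (x + 1) = Ut x"
    and k1: "k \<ge> 1"
    and xm_per: "\<forall>i. xm (i + k) = xm i + 1"
    and xM_per: "\<forall>i. xM (i + k) = xM i + 1"
    and xM0: "xM 0 = 0" and xMk: "xM k = 1"
    and order: "\<forall>i\<in>{1..k}. xM (i - 1) < xm i \<and> xm i < xM i"
    and mins: "\<forall>i\<in>{1..k}. loc_min U (xm i)"
    and maxs: "\<forall>i\<in>{1..k}. loc_max U (xM i)"
    and crit: "{x\<in>{0..<1}. deriv U x = 0} = xm ` {1..k} \<union> xM ` {0..<k}"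
  shows
    "(\<exists>C. C-lipschitz_on UNIV (Wfun U xm k)) \<and> (\<forall>x. Wfun U xm k (x + 1) = Wfun U xm k x)
   \<and> (\<forall>i\<in>{1..k}.
        (\<forall>z\<in>{xm i..xM i}. \<forall>z'\<in>{xm i..xM i}.
            \<not> Wfun U xm k differentiable (at z) \<and> \<not> Wfun U xm k differentiable (at z') \<longrightarrow> z = z')
      \<and> (\<forall>z\<in>{xm i..xM i}. \<not> Wfun U xm k differentiable (at z) \<longrightarrow>
            (\<exists>\<delta>>0. strict_mono_on {z - \<delta>..z} (Wfun U xm k) \<and>
                    (\<forall>y\<in>{z..z + \<delta>}. Wfun U xm k y = Wfun U xm k z)))
      \<and> (\<forall>z\<in>{xM (i - 1)..xm i}. \<forall>z'\<in>{xM (i - 1)..xm i}.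
            \<not> Wfun U xm k differentiable (at z) \<and> \<not> Wfun U xm k differentiable (at z') \<longrightarrow> z = z')
      \<and> (\<forall>z\<in>{xM (i - 1)..xm i}. \<not> Wfun U xm k differentiable (at z) \<longrightarrow>
            (\<exists>\<delta>>0. (\<forall>y\<in>{z - \<delta>..z}. Wfun U xm k y = Wfun U xm k z) \<and>
                    strict_antimono_on {z..z + \<delta>} (Wfun U xm k)))
      \<and> Wfun U xm k differentiable (at (xm i))
      \<and> Wfun U xm k differentiable (at (xM i)))
   \<and> viscosity_solution (\<lambda>p x. p * (p - deriv U x)) (Wfun U xm k)
   \<and> (\<forall>j\<in>{1..k}. Wfun U xm k (xm j) = Wcoef U xm k j)"
proof -
  have U': "\<And>x. (U has_real_derivative deriv U x) (at x)"
    using smoothU by (rule smooth_fun_has_deriv)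
  have continuous: "continuous_on UNIV (deriv U)"
    using smoothU by (rule smooth_fun_deriv_continuous)
  have periodic: "\<And>x. deriv U (x + 1) = deriv U x"
    using U' skew per by (rule deriv_periodic_of_skew_periodic)
  obtain M where M: "\<And>z. \<bar>deriv U z\<bar> \<le> M"
    using continuous_periodic_bounded[OF continuous periodic] by blast
  have "continuous_on UNIV (\<lambda>z. max 0 (deriv U z))" "continuous_on UNIV (\<lambda>z. max 0 (- deriv U z))"
    by (intro continuous_intros continuous)+
  then obtain P Q where P: "\<And>z. (P has_real_derivative max 0 (deriv U z)) (at z)"
    and Q: "\<And>z. (Q has_real_derivative max 0 (- deriv U z)) (at z)"
    by (elim continuous_has_real_antiderivative) blast
  interpret landscape U P Q M k xm xM
    using continuous M P Q U' periodic k1 xm_per xM_per xM0 xMk order mins crit by unfold_locales auto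
  show ?thesis
  proof (intro conjI ballI allI impI)
    show "\<exists>C. C-lipschitz_on UNIV (Wfun U xm k)"
      using W_lipschitz by blast
  qed (auto intro: W_periodic W_viscosity W_differentiable_xm W_differentiable_xM
      W_nondiff_unique_on_ascent W_nondiff_unique_on_descent
      W_nondiff_shape_on_ascent W_nondiff_shape_on_descent simp: W_at_well Wcoef_eq_well_level)
qed

end
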